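(* Each of the three families $\{h_\alpha(\mathbf{z})\}_{\alpha\vdash n}$, $\{\mathbf{C}_\alpha(\mathbf{z})\}_{\alpha\vdash n}$ and $\{\mathbf{K}_\alpha(\mathbf{z})\}_{\alpha\vdash n}$ is a $\mathbb{Q}$-basis of $\Lambda_n\otimes\mathbb{Q}$, the space of homogeneous symmetric functions of degree $n$.
   Context: $h_\alpha=h_{\alpha_1}\cdots h_{\alpha_k}$ is the complete homogeneous symmetric function. For $\alpha\vdash n$ and $\sigma\in S_n$ of cycle type $\alpha$ with order $o(\sigma)$, $\mathbf{C}_\alpha(\mathbf{z})=\frac1{o(\sigma)}\sum_{g\in\langle\sigma\rangle}p_{\lambda(g)}(\mathbf{z})$ where $\lambda(g)$ is the cycle type of $g$ and $p_\lambda$ the power sums (this does not depend on the choice of $\sigma$). Writing $\alpha=(i_1^{\alpha_1},\ldots,i_m^{\alpha_m})$ with distinct part sizes $i_j$ and multiplicities $\alpha_j$, $\mathbf{K}_\alpha(\mathbf{z})=\mathbf{C}_{i_1^{\alpha_1}}(\mathbf{z})\cdots\mathbf{C}_{i_m^{\alpha_m}}(\mathbf{z})$, where $i_j^{\alpha_j}$ is the partition with $\alpha_j$ parts equal to $i_j$. *)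

theory Defs
  imports Complex_Main "HOL-Library.Multiset" "HOL-Combinatorics.Orbits" "HOL-Combinatorics.Permutations"
begin

text \<open>Formal series in the variables z_0, z_1, ... with rational coefficients.
  A monomial is an exponent vector nat => nat (only finitely supported ones matter);
  a series is its coefficient function.\<close>

type_synonym mono = "nat \<Rightarrow> nat"
type_synonym sfun = "mono \<Rightarrow> rat"

definition fin_mono :: "mono \<Rightarrow> bool" where
  "fin_mono m \<longleftrightarrow> finite {i. m i \<noteq> 0}"

definition mdeg :: "mono \<Rightarrow> nat" where
  "mdeg m = (\<Sum>i\<in>{i. m i \<noteq> 0}. m i)"

definition Lambda :: "nat \<Rightarrow> sfun set" where
  "Lambda n = {f. (\<forall>m. f m \<noteq> 0 \<longrightarrow> fin_mono m \<and> mdeg m = n)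
                 \<and> (\<forall>\<sigma> m. bij \<sigma> \<longrightarrow> f (m \<circ> \<sigma>) = f m)}"

definition sf_one :: sfun where
  "sf_one m = (if \<forall>i. m i = 0 then 1 else 0)"

definition sf_mult :: "sfun \<Rightarrow> sfun \<Rightarrow> sfun" where
  "sf_mult f g m = (\<Sum>a\<in>{a. \<forall>i. a i \<le> m i}. f a * g (\<lambda>i. m i - a i))"

definition sf_prod :: "sfun list \<Rightarrow> sfun" where
  "sf_prod xs = foldr sf_mult xs sf_one"

definition sf_h :: "nat \<Rightarrow> sfun" where
  "sf_h k m = (if fin_mono m \<and> mdeg m = k then 1 else 0)"

definition sf_p :: "nat \<Rightarrow> sfun" where
  "sf_p k m = (if 0 < k \<and> (\<exists>i. m = (\<lambda>j. if j = i then k else 0)) then 1 else 0)"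

definition partitions :: "nat \<Rightarrow> nat multiset set" where
  "partitions n = {\<alpha>. (\<forall>x\<in>#\<alpha>. 0 < x) \<and> sum_mset \<alpha> = n}"

definition sf_hpart :: "nat multiset \<Rightarrow> sfun" where
  "sf_hpart \<alpha> = sf_prod (map sf_h (sorted_list_of_multiset \<alpha>))"

definition sf_ppart :: "nat multiset \<Rightarrow> sfun" where
  "sf_ppart \<alpha> = sf_prod (map sf_p (sorted_list_of_multiset \<alpha>))"

definition cycle_type :: "nat \<Rightarrow> (nat \<Rightarrow> nat) \<Rightarrow> nat multiset" where
  "cycle_type n g = image_mset card (mset_set {orbit g x | x. x < n})"

definition sf_C :: "nat multiset \<Rightarrow> sfun" where
  "sf_C \<alpha> = (let n = sum_mset \<alpha>;
                  \<sigma> = (SOME \<sigma>. \<sigma> permutes {0..<n} \<and> cycle_type n \<sigma> = \<alpha>);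
                  G = {\<sigma> ^^ k | k. True}
              in (\<lambda>m. (\<Sum>g\<in>G. sf_ppart (cycle_type n g) m) / of_nat (card G)))"

definition sf_K :: "nat multiset \<Rightarrow> sfun" where
  "sf_K \<alpha> = sf_prod (map (\<lambda>i. sf_C (replicate_mset (count \<alpha> i) i))
                          (sorted_list_of_set (set_mset \<alpha>)))"

definition is_basis_Lambda :: "nat \<Rightarrow> (nat multiset \<Rightarrow> sfun) \<Rightarrow> bool" where
  "is_basis_Lambda n b \<longleftrightarrow>
     (\<forall>\<alpha>\<in>partitions n. b \<alpha> \<in> Lambda n) \<and>
     (\<forall>c. (\<forall>m. (\<Sum>\<alpha>\<in>partitions n. c \<alpha> * b \<alpha> m) = 0) \<longrightarrow> (\<forall>\<alpha>\<in>partitions n. c \<alpha> = 0)) \<and>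
     (\<forall>f\<in>Lambda n. \<exists>c. \<forall>m. f m = (\<Sum>\<alpha>\<in>partitions n. c \<alpha> * b \<alpha> m))"

end

theory Submission
  imports Defs "HOL-Combinatorics.Cycles" "HOL-Library.Disjoint_Sets"
begin

text \<open>
  The power sums \<open>p\<^sub>\<alpha>\<close> form a basis of \<open>\<Lambda>\<^sub>n\<close>: expanded in monomial symmetric
  functions, \<open>p\<^sub>\<alpha>\<close> contains \<open>m\<^sub>\<alpha>\<close> with a positive coefficient and otherwise only
  \<open>m\<^sub>\<beta>\<close> with fewer parts than \<open>\<alpha>\<close>, since a monomial of \<open>p\<^sub>\<alpha>\<close> arises by
  distributing the parts of \<open>\<alpha>\<close> over the variables. Each of \<open>h\<^sub>\<alpha>\<close>, \<open>C\<^sub>\<alpha>\<close>,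
  \<open>K\<^sub>\<alpha>\<close> is in turn triangular with respect to the power sums: it is a nonnegative
  combination of the \<open>p\<^sub>\<nu>\<close> in which \<open>p\<^sub>\<alpha>\<close> occurs and every other \<open>\<nu>\<close> has
  more parts than \<open>\<alpha>\<close>. For \<open>h\<^sub>k\<close> this follows by induction from Newton's identity
  \<open>k h\<^sub>k = \<Sum>\<^sub>i p\<^sub>i h\<^sub>k\<^sub>-\<^sub>i\<close>; for \<open>C\<^sub>\<alpha>\<close> because every power of a
  permutation of cycle type \<open>\<alpha>\<close> has at least as many cycles, and exactly as many only
  if its cycle type is \<open>\<alpha>\<close>. The property is preserved by products, which covers
  \<open>h\<^sub>\<alpha>\<close> and \<open>K\<^sub>\<alpha>\<close>, and a family triangular with respect to a basis is a basis.
\<close>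

section \<open>Monomials and the product of series\<close>

definition mono_single :: "nat \<Rightarrow> nat \<Rightarrow> mono" where
  "mono_single j k = (\<lambda>i. if i = j then k else 0)"

lemma finite_atMost_fin_mono:
  assumes "fin_mono m"
  shows "finite {..m}"
proof -
  let ?S = "{i. m i \<noteq> 0}"
  let ?ext = "\<lambda>a i. if i \<in> ?S then a i else 0"
  have "{..m} \<subseteq> ?ext ` (PiE ?S (\<lambda>i. {..m i}))"
  proof
    fix a assume a: "a \<in> {..m}"
    hence "a = ?ext (restrict a ?S)"
      by (auto simp: le_fun_def fun_eq_iff) (metis le_zero_eq)
    moreover have "restrict a ?S \<in> PiE ?S (\<lambda>i. {..m i})"
      using a by (auto simp: le_fun_def)
    ultimately show "a \<in> ?ext ` (PiE ?S (\<lambda>i. {..m i}))" by blast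
  qed
  moreover have "finite (PiE ?S (\<lambda>i. {..m i}))"
    using assms by (intro finite_PiE) (auto simp: fin_mono_def)
  ultimately show ?thesis using finite_subset by blast
qed

lemma infinite_atMost_not_fin_mono:
  assumes "\<not> fin_mono m"
  shows "infinite {..m}"
proof
  assume fin: "finite {..m}"
  let ?e = "\<lambda>i. mono_single i 1"
  have "?e ` {i. m i \<noteq> 0} \<subseteq> {..m}" by (auto simp: mono_single_def le_fun_def)
  moreover have "inj_on ?e {i. m i \<noteq> 0}" by (auto simp: mono_single_def inj_on_def fun_eq_iff)
  ultimately have "finite {i. m i \<noteq> 0}" using fin by (meson finite_imageD finite_subset)
  with assms show False by (simp add: fin_mono_def)
qed

lemma fin_mono_le:
  assumes "fin_mono m" "a \<le> m"
  shows "fin_mono a"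
proof -
  have "{i. a i \<noteq> 0} \<subseteq> {i. m i \<noteq> 0}"
    using assms(2) by (auto simp: le_fun_def) (metis less_le_trans)
  thus ?thesis using assms(1) by (simp add: fin_mono_def finite_subset)
qed

lemma fin_mono_fun_upd: "fin_mono m \<Longrightarrow> fin_mono (m(j := v))"
  unfolding fin_mono_def by (rule finite_subset[of _ "insert j {i. m i \<noteq> 0}"]) auto

lemma mdeg_superset: "finite F \<Longrightarrow> {i. m i \<noteq> 0} \<subseteq> F \<Longrightarrow> mdeg m = (\<Sum>i\<in>F. m i)"
  unfolding mdeg_def by (rule sum.mono_neutral_left) auto

lemma mdeg_diff:
  assumes fin: "fin_mono m" and "a \<le> m"
  shows "mdeg m = mdeg a + mdeg (m - a)"
proof -
  let ?S = "{i. m i \<noteq> 0}"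
  have S: "finite ?S" using fin by (simp add: fin_mono_def)
  have le: "a i \<le> m i" for i using assms(2) by (simp add: le_fun_def)
  have "mdeg m = (\<Sum>i\<in>?S. a i) + (\<Sum>i\<in>?S. (m - a) i)"
    using le by (simp add: mdeg_def fun_diff_def flip: sum.distrib)
  also have "(\<Sum>i\<in>?S. a i) = mdeg a"
    using le by (intro mdeg_superset[symmetric] S) (auto intro: less_le_trans)
  also have "(\<Sum>i\<in>?S. (m - a) i) = mdeg (m - a)"
    by (intro mdeg_superset[symmetric] S) (auto simp: fun_diff_def)
  finally show ?thesis .
qed

lemma mdeg_eq_0_iff: "fin_mono m \<Longrightarrow> mdeg m = 0 \<longleftrightarrow> (\<forall>i. m i = 0)"
  by (simp add: mdeg_def fin_mono_def)

lemma le_mdeg: "fin_mono m \<Longrightarrow> m j \<le> mdeg m"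
  unfolding mdeg_def fin_mono_def by (cases "m j = 0") (auto intro: member_le_sum)

lemma finite_exponents_ge: "fin_mono m \<Longrightarrow> 0 < x \<Longrightarrow> finite {j. x \<le> m j}"
  unfolding fin_mono_def by (rule finite_subset[rotated]) auto

lemma mono_single_le_iff: "mono_single j k \<le> m \<longleftrightarrow> k \<le> m j"
  by (auto simp: mono_single_def le_fun_def)

lemma mdeg_mono_single: "mdeg (mono_single j k) = k"
  by (subst mdeg_superset[of "{j}"]) (auto simp: mono_single_def)

lemma diff_mono_single: "m - mono_single j k = m(j := m j - k)"
  by (simp add: mono_single_def fun_diff_def fun_eq_iff)

lemma sf_p_eq: "sf_p k a = (if 0 < k \<and> (\<exists>j. a = mono_single j k) then 1 else 0)"
  by (simp add: sf_p_def mono_single_def)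

text \<open>Monomials carry the pointwise order, so \<open>{..m}\<close> are the divisors of \<open>m\<close> and
  \<open>m - a\<close> is the cofactor of \<open>a\<close>.\<close>

lemma sf_mult_eq: "sf_mult f g m = (\<Sum>a\<le>m. f a * g (m - a))"
  by (simp add: sf_mult_def atMost_def le_fun_def fun_diff_def)

lemma sf_mult_not_fin_mono: "\<not> fin_mono m \<Longrightarrow> sf_mult f g m = 0"
  by (simp add: sf_mult_eq infinite_atMost_not_fin_mono)

lemma sf_mult_commute: "sf_mult f g m = sf_mult g f m"
  unfolding sf_mult_eq
  by (rule sum.reindex_bij_witness[where i="\<lambda>a. m - a" and j="\<lambda>a. m - a"])
     (auto simp: le_fun_def fun_diff_def fun_eq_iff mult.commute)

lemma sf_mult_assoc: "sf_mult (sf_mult f g) h m = sf_mult f (sf_mult g h) m"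
proof (cases "fin_mono m")
  case False
  thus ?thesis by (simp add: sf_mult_not_fin_mono)
next
  case fin: True
  have fin_le: "finite {..c}" if "c \<le> m" for c
    using fin_mono_le[OF fin that] by (rule finite_atMost_fin_mono)
  have fin_diff: "finite {..m - a}" for a
    by (rule fin_le) (simp add: le_fun_def)
  have "sf_mult (sf_mult f g) h m = (\<Sum>(c, a)\<in>Sigma {..m} atMost. f a * g (c - a) * h (m - c))"
    by (simp add: sf_mult_eq sum_distrib_right sum.Sigma finite_atMost_fin_mono fin fin_le)
  also have "\<dots> = (\<Sum>(a, b)\<in>Sigma {..m} (\<lambda>a. {..m - a}). f a * (g b * h (m - a - b)))"
    by (rule sum.reindex_bij_witness[where i="\<lambda>(a, b). (\<lambda>i. a i + b i, a)"
                                      and j="\<lambda>(c, a). (a, c - a)"])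
       (auto simp: le_fun_def fun_diff_def fun_eq_iff mult.assoc le_diff_conv2 add.commute,
        (meson le_trans diff_le_mono)+)
  also have "\<dots> = sf_mult f (sf_mult g h) m"
    by (simp add: sf_mult_eq sum_distrib_left sum.Sigma finite_atMost_fin_mono fin fin_diff)
  finally show ?thesis .
qed

definition mono_supported :: "sfun \<Rightarrow> bool" where
  "mono_supported f \<longleftrightarrow> (\<forall>m. f m \<noteq> 0 \<longrightarrow> fin_mono m)"

lemma mono_supported_sf_mult: "mono_supported (sf_mult f g)"
  using sf_mult_not_fin_mono by (auto simp: mono_supported_def)

lemma mono_supported_sf_one: "mono_supported sf_one"
  by (simp add: mono_supported_def sf_one_def fin_mono_def)

lemma sf_mult_one_left:
  assumes "mono_supported f"
  shows "sf_mult sf_one f m = f m"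
proof (cases "fin_mono m")
  case False
  thus ?thesis using assms sf_mult_not_fin_mono by (metis mono_supported_def)
next
  case True
  have "sf_mult sf_one f m = (\<Sum>a\<le>m. if a = (\<lambda>_. 0) then f (m - a) else 0)"
    unfolding sf_mult_eq by (intro sum.cong) (auto simp: sf_one_def fun_eq_iff)
  also have "\<dots> = f m"
    using finite_atMost_fin_mono[OF True] by (simp add: le_fun_def fun_diff_def)
  finally show ?thesis .
qed

lemma sf_mult_nonneg:
  "(\<And>a. 0 \<le> f a) \<Longrightarrow> (\<And>a. 0 \<le> g a) \<Longrightarrow> 0 \<le> sf_mult f g m"
  by (simp add: sf_mult_eq sum_nonneg)

lemma sf_mult_sf_p:
  assumes fin: "fin_mono m" and "0 < k"
  shows "sf_mult (sf_p k) g m = (\<Sum>j | k \<le> m j. g (m - mono_single j k))"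
proof -
  have inj: "inj_on (\<lambda>j. mono_single j k) {j. k \<le> m j}"
    using \<open>0 < k\<close> by (auto simp: inj_on_def mono_single_def fun_eq_iff split: if_splits)
  have "sf_mult (sf_p k) g m = (\<Sum>a \<in> (\<lambda>j. mono_single j k) ` {j. k \<le> m j}. g (m - a))"
    unfolding sf_mult_eq using \<open>0 < k\<close>
    by (intro sum.mono_neutral_cong_right finite_atMost_fin_mono fin)
       (auto simp: sf_p_eq mono_single_le_iff)
  also have "\<dots> = (\<Sum>j | k \<le> m j. g (m - mono_single j k))"
    by (simp add: sum.reindex inj)
  finally show ?thesis .
qed

lemma sf_mult_comp_bij:
  assumes "bij \<sigma>" and f: "\<And>m. f (m \<circ> \<sigma>) = f m" and g: "\<And>m. g (m \<circ> \<sigma>) = g m"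
  shows "sf_mult f g (m \<circ> \<sigma>) = sf_mult f g m"
proof -
  have inv1: "\<sigma> (inv \<sigma> l) = l" and inv2: "inv \<sigma> (\<sigma> l) = l" for l
    using assms(1) by (simp_all add: bij_is_surj surj_f_inv_f bij_is_inj inv_f_f)
  show ?thesis
    unfolding sf_mult_eq
  proof (rule sum.reindex_bij_witness[where j = "\<lambda>a. a \<circ> inv \<sigma>" and i = "\<lambda>a. a \<circ> \<sigma>"])
    fix a :: mono assume a: "a \<in> {..m \<circ> \<sigma>}"
    show "a \<circ> inv \<sigma> \<circ> \<sigma> = a" by (simp add: fun_eq_iff inv2)
    show "a \<circ> inv \<sigma> \<in> {..m}" using a by (auto simp: le_fun_def) (metis inv1)
    have "f (a \<circ> inv \<sigma>) = f a" using f[of "a \<circ> inv \<sigma>"] by (simp add: comp_def inv2)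
    moreover have "g (m - (a \<circ> inv \<sigma>)) = g ((m \<circ> \<sigma>) - a)"
      using g[of "m - (a \<circ> inv \<sigma>)"] by (simp add: fun_diff_def comp_def inv2)
    ultimately show "f (a \<circ> inv \<sigma>) * g (m - (a \<circ> inv \<sigma>)) = f a * g ((m \<circ> \<sigma>) - a)"
      by simp
  next
    fix a :: mono assume "a \<in> {..m}"
    thus "a \<circ> \<sigma> \<circ> inv \<sigma> = a" "a \<circ> \<sigma> \<in> {..m \<circ> \<sigma>}"
      by (simp_all add: fun_eq_iff inv1 le_fun_def)
  qed
qed

section \<open>The ring of series\<close>

text \<open>On a monomial of infinite support \<^const>\<open>sf_mult\<close> is an infinite, hence zero, sum;
  restricting to series supported on finite monomials makes \<^const>\<open>sf_one\<close> a unit.\<close>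

typedef mseries = "{f. mono_supported f}"
  morphisms coeffs Abs_mseries
  by (rule exI[of _ "\<lambda>_. 0"]) (simp add: mono_supported_def)

setup_lifting type_definition_mseries

instantiation mseries :: comm_ring_1
begin

lift_definition zero_mseries :: mseries is "\<lambda>_. 0"
  by (simp add: mono_supported_def)

lift_definition one_mseries :: mseries is sf_one
  by (rule mono_supported_sf_one)

lift_definition plus_mseries :: "mseries \<Rightarrow> mseries \<Rightarrow> mseries" is "\<lambda>f g m. f m + g m"
  by (simp add: mono_supported_def) (metis add.right_neutral)

lift_definition minus_mseries :: "mseries \<Rightarrow> mseries \<Rightarrow> mseries" is "\<lambda>f g m. f m - g m"
  by (simp add: mono_supported_def) (metis diff_zero)

lift_definition uminus_mseries :: "mseries \<Rightarrow> mseries" is "\<lambda>f m. - f m"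
  by (auto simp: mono_supported_def)

lift_definition times_mseries :: "mseries \<Rightarrow> mseries \<Rightarrow> mseries" is sf_mult
  by (rule mono_supported_sf_mult)

instance
proof
  fix a b c :: mseries
  show "a * b * c = a * (b * c)" by transfer (simp add: fun_eq_iff sf_mult_assoc)
  show "a * b = b * a" by transfer (simp add: fun_eq_iff sf_mult_commute)
  show "1 * a = a" by transfer (simp add: fun_eq_iff sf_mult_one_left)
  show "(a + b) * c = a * c + b * c"
    by transfer (simp add: fun_eq_iff sf_mult_eq sum.distrib algebra_simps)
  show "a + b + c = a + (b + c)" by transfer (simp add: fun_eq_iff algebra_simps)
  show "a + b = b + a" by transfer (simp add: fun_eq_iff algebra_simps)
  show "0 + a = a" by transfer simp
  show "- a + a = 0" by transfer simp
  show "a - b = a + - b" by transfer simp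
  show "(0::mseries) \<noteq> 1" by transfer (auto simp: fun_eq_iff sf_one_def)
qed

end

lemmas coeffs_ring_simps =
  zero_mseries.rep_eq one_mseries.rep_eq plus_mseries.rep_eq minus_mseries.rep_eq
  uminus_mseries.rep_eq times_mseries.rep_eq

lemma coeffs_sum: "coeffs (\<Sum>t\<in>I. x t) m = (\<Sum>t\<in>I. coeffs (x t) m)"
  by (induction I rule: infinite_finite_induct) (auto simp: coeffs_ring_simps)

lemma mono_supported_coeffs: "mono_supported (coeffs x)"
  using coeffs by simp

lemma mseries_eqI: "(\<And>m. coeffs x m = coeffs y m) \<Longrightarrow> x = y"
  by (metis coeffs_inject ext)

lift_definition ser_const :: "rat \<Rightarrow> mseries" is "\<lambda>c m. c * sf_one m"
  by (auto simp: mono_supported_def sf_one_def fin_mono_def)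

lemma coeffs_ser_const_mult: "coeffs (ser_const c * x) m = c * coeffs x m"
proof -
  have "coeffs (ser_const c * x) m = c * sf_mult sf_one (coeffs x) m"
    by (simp add: coeffs_ring_simps ser_const.rep_eq sf_mult_eq sum_distrib_left mult.assoc)
  thus ?thesis by (simp add: sf_mult_one_left mono_supported_coeffs)
qed

lemma ser_const_mult: "ser_const (a * b) = ser_const a * ser_const b"
  by (rule mseries_eqI) (simp add: coeffs_ser_const_mult ser_const.rep_eq)

lemma ser_const_add: "ser_const (a + b) = ser_const a + ser_const b"
  by (rule mseries_eqI) (simp add: coeffs_ring_simps ser_const.rep_eq algebra_simps)

lemma ser_const_0: "ser_const 0 = 0"
  by (rule mseries_eqI) (simp add: coeffs_ring_simps ser_const.rep_eq)

lemma ser_const_1: "ser_const 1 = 1"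
  by (rule mseries_eqI) (simp add: coeffs_ring_simps ser_const.rep_eq)

lemma ser_const_sum: "ser_const (\<Sum>t\<in>I. f t) = (\<Sum>t\<in>I. ser_const (f t))"
  by (induction I rule: infinite_finite_induct) (auto simp: ser_const_0 ser_const_add)

lemma ser_const_of_nat: "ser_const (of_nat k) = of_nat k"
  by (induction k) (auto simp: ser_const_0 ser_const_add ser_const_1)

lift_definition ser_p :: "nat \<Rightarrow> mseries" is sf_p
  by (auto simp: mono_supported_def sf_p_def fin_mono_def)

lift_definition ser_h :: "nat \<Rightarrow> mseries" is sf_h
  by (auto simp: mono_supported_def sf_h_def)

definition ser_ppart :: "nat multiset \<Rightarrow> mseries" where
  "ser_ppart \<alpha> = (\<Prod>x\<in>#\<alpha>. ser_p x)"

definition ser_hpart :: "nat multiset \<Rightarrow> mseries" where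
  "ser_hpart \<alpha> = (\<Prod>x\<in>#\<alpha>. ser_h x)"

definition perm_powers :: "(nat \<Rightarrow> nat) \<Rightarrow> (nat \<Rightarrow> nat) set" where
  "perm_powers \<sigma> = {\<sigma> ^^ k | k. True}"

definition perm_of_type :: "nat multiset \<Rightarrow> nat \<Rightarrow> nat" where
  "perm_of_type \<alpha> = (SOME \<sigma>. \<sigma> permutes {0..<sum_mset \<alpha>} \<and> cycle_type (sum_mset \<alpha>) \<sigma> = \<alpha>)"

definition ser_C :: "nat multiset \<Rightarrow> mseries" where
  "ser_C \<alpha> = (let G = perm_powers (perm_of_type \<alpha>) in
     (\<Sum>g\<in>G. ser_const (1 / of_nat (card G)) * ser_ppart (cycle_type (sum_mset \<alpha>) g)))"

definition ser_K :: "nat multiset \<Rightarrow> mseries" where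
  "ser_K \<alpha> = (\<Prod>i\<in>set_mset \<alpha>. ser_C (replicate_mset (count \<alpha> i) i))"

lemma sf_prod_coeffs: "sf_prod (map coeffs xs) = coeffs (prod_list xs)"
  by (induction xs) (simp_all add: sf_prod_def coeffs_ring_simps)

lemma coeffs_ser_ppart: "coeffs (ser_ppart \<alpha>) = sf_ppart \<alpha>"
  using sf_prod_coeffs[of "map ser_p (sorted_list_of_multiset \<alpha>)"]
  by (simp add: sf_ppart_def ser_ppart_def prod_mset_prod_list[symmetric] ser_p.rep_eq[abs_def]
      comp_def)

lemma coeffs_ser_hpart: "coeffs (ser_hpart \<alpha>) = sf_hpart \<alpha>"
  using sf_prod_coeffs[of "map ser_h (sorted_list_of_multiset \<alpha>)"]
  by (simp add: sf_hpart_def ser_hpart_def prod_mset_prod_list[symmetric] ser_h.rep_eq[abs_def]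
      comp_def)

lemma coeffs_ser_C: "coeffs (ser_C \<alpha>) = sf_C \<alpha>"
  by (simp add: fun_eq_iff sf_C_def ser_C_def Let_def perm_of_type_def perm_powers_def
      coeffs_sum coeffs_ser_const_mult coeffs_ser_ppart sum_divide_distrib)

lemma coeffs_ser_K: "coeffs (ser_K \<alpha>) = sf_K \<alpha>"
  using sf_prod_coeffs[of "map (\<lambda>i. ser_C (replicate_mset (count \<alpha> i) i))
                              (sorted_list_of_set (set_mset \<alpha>))"]
  by (simp add: sf_K_def ser_K_def coeffs_ser_C comp_def prod.distinct_set_conv_list[symmetric])

section \<open>Partitions and expansions in power sums\<close>

lemma mem_le_sum_mset: "x \<in># \<alpha> \<Longrightarrow> x \<le> sum_mset (\<alpha> :: nat multiset)"
  by (induction \<alpha>) auto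

lemma size_le_sum_mset: "(\<forall>x\<in>#\<alpha>. 0 < x) \<Longrightarrow> size \<alpha> \<le> sum_mset (\<alpha> :: nat multiset)"
  by (induction \<alpha>) auto

lemma partitions_pos: "\<alpha> \<in> partitions n \<Longrightarrow> x \<in># \<alpha> \<Longrightarrow> 0 < x"
  by (simp add: partitions_def)

lemma partitions_sum_mset: "\<alpha> \<in> partitions n \<Longrightarrow> sum_mset \<alpha> = n"
  by (simp add: partitions_def)

lemma finite_partitions: "finite (partitions n)"
proof (rule finite_subset)
  show "partitions n \<subseteq> (\<Union>k\<le>n. multisets_of_size {..n} k)"
    using mem_le_sum_mset size_le_sum_mset
    by (fastforce simp: partitions_def multisets_of_size_def)
qed auto

lemma partitions_add: "\<alpha> \<in> partitions n1 \<Longrightarrow> \<beta> \<in> partitions n2 \<Longrightarrow> \<alpha> + \<beta> \<in> partitions (n1 + n2)"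
  by (auto simp: partitions_def)

lemma partitions_0: "partitions 0 = {{#}}"
  by (auto simp: partitions_def) (metis less_numeral_extra(3) multiset_nonemptyE)

lemma singleton_partition: "0 < k \<Longrightarrow> {#k#} \<in> partitions k"
  by (simp add: partitions_def)

definition p_expansion :: "nat \<Rightarrow> mseries \<Rightarrow> (nat multiset \<Rightarrow> rat) \<Rightarrow> bool" where
  "p_expansion n x c \<longleftrightarrow> x = (\<Sum>\<nu>\<in>partitions n. ser_const (c \<nu>) * ser_ppart \<nu>)"

lemma coeffs_p_expansion:
  "p_expansion n x c \<Longrightarrow> coeffs x m = (\<Sum>\<nu>\<in>partitions n. c \<nu> * sf_ppart \<nu> m)"
  by (simp add: p_expansion_def coeffs_sum coeffs_ser_const_mult coeffs_ser_ppart)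

definition coeff_conv ::
    "nat \<Rightarrow> nat \<Rightarrow> (nat multiset \<Rightarrow> rat) \<Rightarrow> (nat multiset \<Rightarrow> rat) \<Rightarrow> nat multiset \<Rightarrow> rat" where
  "coeff_conv n1 n2 c1 c2 \<nu> =
     (\<Sum>p\<in>{p \<in> partitions n1 \<times> partitions n2. fst p + snd p = \<nu>}. c1 (fst p) * c2 (snd p))"

lemma p_expansion_mult:
  assumes "p_expansion n1 x c1" "p_expansion n2 y c2"
  shows "p_expansion (n1 + n2) (x * y) (coeff_conv n1 n2 c1 c2)"
proof -
  let ?pairs = "\<lambda>\<nu>. {p \<in> partitions n1 \<times> partitions n2. fst p + snd p = \<nu>}"
  have "x * y = (\<Sum>p\<in>partitions n1 \<times> partitions n2.
                   ser_const (c1 (fst p) * c2 (snd p)) * ser_ppart (fst p + snd p))"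
    using assms
    by (simp add: p_expansion_def sum_product sum.cartesian_product ser_const_mult ser_ppart_def
        algebra_simps case_prod_beta)
  also have "\<dots> = (\<Sum>\<nu>\<in>partitions (n1 + n2). \<Sum>p\<in>?pairs \<nu>.
                     ser_const (c1 (fst p) * c2 (snd p)) * ser_ppart (fst p + snd p))"
    by (rule sum.group[symmetric]) (auto simp: finite_partitions partitions_add)
  also have "\<dots> = (\<Sum>\<nu>\<in>partitions (n1 + n2). ser_const (coeff_conv n1 n2 c1 c2 \<nu>) * ser_ppart \<nu>)"
    unfolding coeff_conv_def ser_const_sum sum_distrib_right by (intro sum.cong refl) auto
  finally show ?thesis by (simp add: p_expansion_def)
qed

lemma coeff_conv_nonneg:
  "(\<forall>\<nu>. 0 \<le> c1 \<nu>) \<Longrightarrow> (\<forall>\<nu>. 0 \<le> c2 \<nu>) \<Longrightarrow> 0 \<le> coeff_conv n1 n2 c1 c2 \<nu>"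
  unfolding coeff_conv_def by (intro sum_nonneg) auto

lemma coeff_conv_pos:
  assumes "\<forall>\<nu>. 0 \<le> c1 \<nu>" "\<forall>\<nu>. 0 \<le> c2 \<nu>" "\<alpha> \<in> partitions n1" "\<beta> \<in> partitions n2"
    and "0 < c1 \<alpha>" "0 < c2 \<beta>"
  shows "0 < coeff_conv n1 n2 c1 c2 (\<alpha> + \<beta>)"
proof -
  have "c1 \<alpha> * c2 \<beta> \<le> coeff_conv n1 n2 c1 c2 (\<alpha> + \<beta>)"
    unfolding coeff_conv_def
    using member_le_sum[of "(\<alpha>, \<beta>)" "{p \<in> partitions n1 \<times> partitions n2. fst p + snd p = \<alpha> + \<beta>}"
        "\<lambda>p. c1 (fst p) * c2 (snd p)"] assms
    by (simp add: finite_partitions)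
  moreover have "0 < c1 \<alpha> * c2 \<beta>" using assms by simp
  ultimately show ?thesis by linarith
qed

lemma coeff_conv_nonzeroE:
  assumes "coeff_conv n1 n2 c1 c2 \<nu> \<noteq> 0"
  obtains \<alpha> \<beta> where "\<alpha> \<in> partitions n1" "\<beta> \<in> partitions n2" "c1 \<alpha> \<noteq> 0" "c2 \<beta> \<noteq> 0"
    "\<nu> = \<alpha> + \<beta>"
proof -
  from assms obtain p where "p \<in> {p \<in> partitions n1 \<times> partitions n2. fst p + snd p = \<nu>}"
      "c1 (fst p) * c2 (snd p) \<noteq> 0"
    unfolding coeff_conv_def by (rule sum.not_neutral_contains_not_neutral)
  thus ?thesis using that by (cases p) auto
qed

lemma p_expansion_add:
  "p_expansion n x c \<Longrightarrow> p_expansion n y d \<Longrightarrow> p_expansion n (x + y) (\<lambda>\<nu>. c \<nu> + d \<nu>)"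
  by (simp add: p_expansion_def ser_const_add sum.distrib algebra_simps)

lemma p_expansion_scale:
  "p_expansion n x c \<Longrightarrow> p_expansion n (ser_const r * x) (\<lambda>\<nu>. r * c \<nu>)"
  by (simp add: p_expansion_def sum_distrib_left ser_const_mult mult.assoc)

lemma p_expansion_sum:
  "finite I \<Longrightarrow> (\<And>i. i \<in> I \<Longrightarrow> p_expansion n (x i) (c i)) \<Longrightarrow>
    p_expansion n (\<Sum>i\<in>I. x i) (\<lambda>\<nu>. \<Sum>i\<in>I. c i \<nu>)"
proof (induction I rule: finite_induct)
  case empty
  thus ?case by (simp add: p_expansion_def ser_const_0)
next
  case (insert i I)
  thus ?case using p_expansion_add[of n "x i" "c i"] by simp
qed

lemma p_expansion_ser_ppart:
  assumes "\<beta> \<in> partitions n"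
  shows "p_expansion n (ser_ppart \<beta>) (\<lambda>\<nu>. if \<nu> = \<beta> then 1 else 0)"
proof -
  have "(\<Sum>\<nu>\<in>partitions n. ser_const (if \<nu> = \<beta> then 1 else 0) * ser_ppart \<nu>) =
        (\<Sum>\<nu>\<in>partitions n. if \<nu> = \<beta> then ser_ppart \<nu> else 0)"
    by (intro sum.cong) (auto simp: ser_const_0 ser_const_1)
  thus ?thesis using assms finite_partitions by (simp add: p_expansion_def)
qed

lemma p_expansion_ser_p: "0 < k \<Longrightarrow> p_expansion k (ser_p k) (\<lambda>\<nu>. if \<nu> = {#k#} then 1 else 0)"
  using p_expansion_ser_ppart[OF singleton_partition, of k] by (simp add: ser_ppart_def)

definition p_nonneg :: "nat \<Rightarrow> mseries \<Rightarrow> bool" where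
  "p_nonneg n x \<longleftrightarrow> (\<exists>c. p_expansion n x c \<and> (\<forall>\<nu>. 0 \<le> c \<nu>))"

lemma p_nonneg_mult: "p_nonneg n1 x \<Longrightarrow> p_nonneg n2 y \<Longrightarrow> p_nonneg (n1 + n2) (x * y)"
  unfolding p_nonneg_def using p_expansion_mult coeff_conv_nonneg by blast

lemma p_nonneg_sum:
  assumes "finite I" "\<And>i. i \<in> I \<Longrightarrow> p_nonneg n (x i)"
  shows "p_nonneg n (\<Sum>i\<in>I. x i)"
proof -
  obtain c where "\<And>i. i \<in> I \<Longrightarrow> p_expansion n (x i) (c i) \<and> (\<forall>\<nu>. 0 \<le> c i \<nu>)"
    using assms(2) unfolding p_nonneg_def by metis
  thus ?thesis
    unfolding p_nonneg_def using p_expansion_sum[OF assms(1)] by (blast intro: sum_nonneg)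
qed

definition p_triangular :: "nat \<Rightarrow> nat multiset \<Rightarrow> mseries \<Rightarrow> bool" where
  "p_triangular n \<alpha> x \<longleftrightarrow> \<alpha> \<in> partitions n \<and>
     (\<exists>c. p_expansion n x c \<and> (\<forall>\<nu>. 0 \<le> c \<nu>) \<and> 0 < c \<alpha> \<and>
          (\<forall>\<nu>\<in>partitions n. c \<nu> \<noteq> 0 \<longrightarrow> \<nu> = \<alpha> \<or> size \<alpha> < size \<nu>))"

lemma p_triangular_mult:
  assumes "p_triangular n1 \<alpha>1 x" "p_triangular n2 \<alpha>2 y"
  shows "p_triangular (n1 + n2) (\<alpha>1 + \<alpha>2) (x * y)"
proof -
  obtain c1 where c1: "p_expansion n1 x c1" "\<forall>\<nu>. 0 \<le> c1 \<nu>" "0 < c1 \<alpha>1"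
      "\<forall>\<nu>\<in>partitions n1. c1 \<nu> \<noteq> 0 \<longrightarrow> \<nu> = \<alpha>1 \<or> size \<alpha>1 < size \<nu>"
    and \<alpha>1: "\<alpha>1 \<in> partitions n1"
    using assms(1) by (auto simp: p_triangular_def)
  obtain c2 where c2: "p_expansion n2 y c2" "\<forall>\<nu>. 0 \<le> c2 \<nu>" "0 < c2 \<alpha>2"
      "\<forall>\<nu>\<in>partitions n2. c2 \<nu> \<noteq> 0 \<longrightarrow> \<nu> = \<alpha>2 \<or> size \<alpha>2 < size \<nu>"
    and \<alpha>2: "\<alpha>2 \<in> partitions n2"
    using assms(2) by (auto simp: p_triangular_def)
  have "\<nu> = \<alpha>1 + \<alpha>2 \<or> size (\<alpha>1 + \<alpha>2) < size \<nu>" if "coeff_conv n1 n2 c1 c2 \<nu> \<noteq> 0" for \<nu>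
    using that
  proof (rule coeff_conv_nonzeroE)
    fix \<beta>1 \<beta>2 assume "\<beta>1 \<in> partitions n1" "\<beta>2 \<in> partitions n2" "c1 \<beta>1 \<noteq> 0" "c2 \<beta>2 \<noteq> 0"
      and "\<nu> = \<beta>1 + \<beta>2"
    thus ?thesis using c1(4) c2(4) by fastforce
  qed
  thus ?thesis
    unfolding p_triangular_def
    using p_expansion_mult[OF c1(1) c2(1)] coeff_conv_nonneg[OF c1(2) c2(2)]
      coeff_conv_pos[OF c1(2) c2(2) \<alpha>1 \<alpha>2 c1(3) c2(3)] partitions_add[OF \<alpha>1 \<alpha>2]
    by blast
qed

lemma p_triangular_one: "p_triangular 0 {#} 1"
  using p_expansion_ser_ppart[of "{#}" 0]
  by (auto simp: p_triangular_def partitions_0 ser_ppart_def)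

lemma p_triangular_prod_mset:
  "(\<And>i. i \<in># M \<Longrightarrow> p_triangular (n i) (\<alpha> i) (x i)) \<Longrightarrow>
    p_triangular (\<Sum>i\<in>#M. n i) (\<Sum>i\<in>#M. \<alpha> i) (\<Prod>i\<in>#M. x i)"
  by (induction M) (auto simp: p_triangular_one intro: p_triangular_mult)

lemma p_triangular_prod:
  "finite A \<Longrightarrow> (\<And>i. i \<in> A \<Longrightarrow> p_triangular (n i) (\<alpha> i) (x i)) \<Longrightarrow>
    p_triangular (\<Sum>i\<in>A. n i) (\<Sum>i\<in>A. \<alpha> i) (\<Prod>i\<in>A. x i)"
  using p_triangular_prod_mset[of "mset_set A" n \<alpha> x]
  by (simp add: sum_unfold_sum_mset prod_unfold_prod_mset)

lemma p_triangular_sumI: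
  assumes fin: "finite I" and part: "\<And>t. t \<in> I \<Longrightarrow> \<nu> t \<in> partitions n"
    and nonneg: "\<And>t. t \<in> I \<Longrightarrow> 0 \<le> w t"
    and tri: "\<And>t. t \<in> I \<Longrightarrow> 0 < w t \<Longrightarrow> \<nu> t = \<alpha> \<or> size \<alpha> < size (\<nu> t)"
    and t0: "t0 \<in> I" "0 < w t0" "\<nu> t0 = \<alpha>"
  shows "p_triangular n \<alpha> (\<Sum>t\<in>I. ser_const (w t) * ser_ppart (\<nu> t))"
proof -
  define c where "c \<beta> = (\<Sum>t | t \<in> I \<and> \<nu> t = \<beta>. w t)" for \<beta>
  have "(\<Sum>t\<in>I. ser_const (w t) * ser_ppart (\<nu> t)) =
        (\<Sum>\<beta>\<in>partitions n. \<Sum>t | t \<in> I \<and> \<nu> t = \<beta>. ser_const (w t) * ser_ppart (\<nu> t))"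
    by (rule sum.group[symmetric]) (auto simp: fin finite_partitions part)
  also have "\<dots> = (\<Sum>\<beta>\<in>partitions n. ser_const (c \<beta>) * ser_ppart \<beta>)"
    unfolding c_def ser_const_sum sum_distrib_right by (intro sum.cong refl) auto
  finally have "p_expansion n (\<Sum>t\<in>I. ser_const (w t) * ser_ppart (\<nu> t)) c"
    by (simp add: p_expansion_def)
  moreover have "0 \<le> c \<beta>" for \<beta>
    unfolding c_def by (intro sum_nonneg) (auto simp: nonneg)
  moreover have "0 < c \<alpha>"
  proof -
    have "w t0 \<le> c \<alpha>"
      unfolding c_def by (rule member_le_sum) (auto simp: t0 nonneg fin)
    thus ?thesis using t0 by linarith
  qed
  moreover have "\<beta> = \<alpha> \<or> size \<alpha> < size \<beta>" if nonzero: "c \<beta> \<noteq> 0" for \<beta>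
  proof -
    obtain t where "t \<in> {t. t \<in> I \<and> \<nu> t = \<beta>}" "w t \<noteq> 0"
      using nonzero unfolding c_def by (rule sum.not_neutral_contains_not_neutral)
    thus ?thesis using tri[of t] nonneg[of t] by auto
  qed
  ultimately show ?thesis
    unfolding p_triangular_def using part t0 by blast
qed

section \<open>Complete homogeneous symmetric functions\<close>

text \<open>Both sides count the cells of the diagram with row lengths \<open>m j\<close>, by columns and in
  total.\<close>

lemma sum_card_exponents_ge:
  assumes fin: "fin_mono m"
  shows "(\<Sum>i=1..mdeg m. card {j. i \<le> m j}) = mdeg m"
proof -
  let ?S = "{j. m j \<noteq> 0}"
  have S: "finite ?S" using fin by (simp add: fin_mono_def)
  have "(\<Sum>i=1..mdeg m. card {j. i \<le> m j}) = (\<Sum>i=1..mdeg m. \<Sum>j\<in>?S. of_bool (i \<le> m j))"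
    using S by (intro sum.cong refl) (auto intro!: arg_cong[where f = card])
  also have "\<dots> = (\<Sum>j\<in>?S. \<Sum>i=1..mdeg m. of_bool (i \<le> m j))"
    by (rule sum.swap)
  also have "\<dots> = (\<Sum>j\<in>?S. m j)"
  proof (intro sum.cong refl)
    fix j
    have "{1..mdeg m} \<inter> {i. i \<le> m j} = {1..m j}" using le_mdeg[OF fin, of j] by auto
    thus "(\<Sum>i=1..mdeg m. of_bool (i \<le> m j)) = m j" by simp
  qed
  finally show ?thesis by (simp add: mdeg_def)
qed

lemma sf_mult_sf_p_sf_h:
  assumes "1 \<le> i" "i \<le> k"
  shows "sf_mult (sf_p i) (sf_h (k - i)) m =
           (if fin_mono m \<and> mdeg m = k then of_nat (card {j. i \<le> m j}) else 0)"
proof (cases "fin_mono m")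
  case False
  thus ?thesis by (simp add: sf_mult_not_fin_mono)
next
  case fin: True
  have "sf_h (k - i) (m - mono_single j i) = of_bool (mdeg m = k)" if "i \<le> m j" for j
  proof -
    have "mono_single j i \<le> m" using that by (simp add: mono_single_le_iff)
    hence "mdeg m = i + mdeg (m - mono_single j i)" "fin_mono (m - mono_single j i)"
      using mdeg_diff[OF fin] fin_mono_le[OF fin] by (auto simp: mdeg_mono_single le_fun_def
          fun_diff_def)
    thus ?thesis using assms by (auto simp: sf_h_def)
  qed
  thus ?thesis using assms fin by (simp add: sf_mult_sf_p)
qed

lemma newton_identity: "of_nat k * ser_h k = (\<Sum>i=1..k. ser_p i * ser_h (k - i))"
proof (rule mseries_eqI)
  fix m
  have "coeffs (of_nat k * ser_h k) m =
        (if fin_mono m \<and> mdeg m = k then of_nat (\<Sum>i=1..k. card {j. i \<le> m j}) else 0)"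
    using sum_card_exponents_ge[of m]
    by (auto simp: ser_const_of_nat[symmetric] coeffs_ser_const_mult
        ser_h.rep_eq sf_h_def simp del: of_nat_sum)
  also have "\<dots> = coeffs (\<Sum>i=1..k. ser_p i * ser_h (k - i)) m"
    by (cases "fin_mono m \<and> mdeg m = k")
       (auto simp: coeffs_sum coeffs_ring_simps ser_p.rep_eq ser_h.rep_eq sf_mult_sf_p_sf_h)
  finally show "coeffs (of_nat k * ser_h k) m = coeffs (\<Sum>i=1..k. ser_p i * ser_h (k - i)) m" .
qed

lemma ser_h_0: "ser_h 0 = 1"
  by (rule mseries_eqI) (auto simp: ser_h.rep_eq coeffs_ring_simps sf_h_def sf_one_def
      mdeg_eq_0_iff fin_mono_def)

lemma ser_h_recurrence:
  assumes "1 \<le> k"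
  shows "ser_h k = ser_const (1 / of_nat k) * (ser_p k + (\<Sum>i\<in>{1..<k}. ser_p i * ser_h (k - i)))"
proof -
  have "{1..k} = insert k {1..<k}" using assms by auto
  hence "of_nat k * ser_h k = ser_p k + (\<Sum>i\<in>{1..<k}. ser_p i * ser_h (k - i))"
    by (simp add: newton_identity ser_h_0)
  moreover have "ser_const (1 / of_nat k) * of_nat k = 1"
    using assms by (simp add: ser_const_of_nat[symmetric] ser_const_mult[symmetric] ser_const_1)
  ultimately show ?thesis by (metis mult.assoc mult_1)
qed

lemma p_expansion_ser_h:
  assumes "1 \<le> k"
  shows "\<exists>c. p_expansion k (ser_h k) c \<and> (\<forall>\<nu>. 0 \<le> c \<nu>) \<and> 0 < c {#k#}"
  using assms
proof (induction k rule: less_induct)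
  case (less k)
  have "p_nonneg k (ser_p i * ser_h (k - i))" if "i \<in> {1..<k}" for i
  proof -
    have "p_nonneg i (ser_p i)"
      using p_expansion_ser_p[of i] that by (auto simp: p_nonneg_def)
    moreover have "k - i < k" "1 \<le> k - i" using that by auto
    hence "p_nonneg (k - i) (ser_h (k - i))"
      using less.IH by (auto simp: p_nonneg_def)
    ultimately show ?thesis using p_nonneg_mult that by fastforce
  qed
  hence "p_nonneg k (\<Sum>i\<in>{1..<k}. ser_p i * ser_h (k - i))"
    by (intro p_nonneg_sum) auto
  then obtain d where d: "p_expansion k (\<Sum>i\<in>{1..<k}. ser_p i * ser_h (k - i)) d" "\<forall>\<nu>. 0 \<le> d \<nu>"
    unfolding p_nonneg_def by blast
  define c where "c \<nu> = 1 / of_nat k * ((if \<nu> = {#k#} then 1 else 0) + d \<nu>)" for \<nu>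
  have "p_expansion k (ser_h k) c"
    unfolding ser_h_recurrence[OF less.prems] c_def
    using less.prems by (intro p_expansion_scale p_expansion_add p_expansion_ser_p d(1)) simp
  moreover have "0 \<le> c \<nu>" for \<nu>
    using d(2) by (simp add: c_def)
  moreover have "0 < c {#k#}"
    using d(2) less.prems by (simp add: c_def add_pos_nonneg)
  ultimately show ?case by blast
qed

lemma p_triangular_ser_h:
  assumes "1 \<le> k"
  shows "p_triangular k {#k#} (ser_h k)"
proof -
  have "\<nu> = {#k#} \<or> 1 < size \<nu>" if \<nu>: "\<nu> \<in> partitions k" for \<nu>
  proof (cases "size \<nu> = 1")
    case True
    then obtain a where "\<nu> = {#a#}" using size_1_singleton_mset by blast
    thus ?thesis using \<nu> by (simp add: partitions_def)
  next
    case False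
    have "\<nu> \<noteq> {#}" using \<nu> assms by (auto simp: partitions_def)
    hence "size \<nu> \<noteq> 0" by simp
    thus ?thesis using False by linarith
  qed
  thus ?thesis
    using p_expansion_ser_h[OF assms] singleton_partition[of k] assms
    by (auto simp: p_triangular_def)
qed

lemma p_triangular_ser_hpart:
  assumes "\<alpha> \<in> partitions n"
  shows "p_triangular n \<alpha> (ser_hpart \<alpha>)"
proof -
  have "p_triangular (\<Sum>x\<in>#\<alpha>. x) (\<Sum>x\<in>#\<alpha>. {#x#}) (\<Prod>x\<in>#\<alpha>. ser_h x)"
    using partitions_pos[OF assms] by (intro p_triangular_prod_mset p_triangular_ser_h)
      (auto simp: Suc_le_eq)
  thus ?thesis using partitions_sum_mset[OF assms] by (simp add: ser_hpart_def)
qed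

section \<open>Cycle types of powers of a permutation\<close>

lemma refines_card:
  assumes ref: "refines A P Q" and fin: "finite A"
  shows "card Q \<le> card P \<and> (card Q = card P \<longrightarrow> P = Q)"
proof -
  have P: "partition_on A P" and Q: "partition_on A Q" and coarser: "\<forall>X\<in>P. \<exists>Y\<in>Q. X \<subseteq> Y"
    using ref by (auto simp: refines_def)
  have same_block: "Y = Y'" if "Y \<in> Q" "Y' \<in> Q" "x \<in> Y" "x \<in> Y'" for Y Y' x
    using that partition_onD2[OF Q] by (auto dest: disjointD)
  have in_block: "\<exists>X\<in>P. x \<in> X" if "x \<in> A" for x
    using that partition_onD1[OF P] by blast
  define f where "f X = (SOME Y. Y \<in> Q \<and> X \<subseteq> Y)" for X
  have f: "f X \<in> Q" "X \<subseteq> f X" if "X \<in> P" for X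
    using someI_ex[of "\<lambda>Y. Y \<in> Q \<and> X \<subseteq> Y"] coarser that by (auto simp: f_def)
  have f_eq: "f X = Y" if "X \<in> P" "Y \<in> Q" "x \<in> X" "x \<in> Y" for X Y x
    using f[OF that(1)] that by (intro same_block[of _ _ x]) auto
  have onto: "f ` P = Q"
  proof (intro equalityI subsetI)
    fix Y assume Y: "Y \<in> Q"
    then obtain y where "y \<in> Y" using partition_onD3[OF Q] by fastforce
    moreover from this obtain X where "X \<in> P" "y \<in> X"
      using in_block Y partition_onD1[OF Q] by blast
    ultimately show "Y \<in> f ` P" using f_eq Y by blast
  qed (use f in auto)
  have "P = Q" if eq: "card Q = card P"
  proof -
    have inj: "inj_on f P"
      using eq onto finite_elements[OF fin P] by (intro eq_card_imp_inj_on) auto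
    have "f X \<subseteq> X" if X: "X \<in> P" for X
    proof
      fix y assume y: "y \<in> f X"
      then obtain X' where X': "X' \<in> P" "y \<in> X'"
        using in_block f(1)[OF X] partition_onD1[OF Q] by blast
      hence "f X' = f X" using f_eq f(1)[OF X] y by blast
      thus "y \<in> X" using inj X X' by (auto dest: inj_onD)
    qed
    hence "f X = X" if "X \<in> P" for X using f(2) that by blast
    thus ?thesis using onto by (simp cong: image_cong)
  qed
  thus ?thesis using onto card_image_le[OF finite_elements[OF fin P], of f] by auto
qed

definition orbits :: "nat \<Rightarrow> (nat \<Rightarrow> nat) \<Rightarrow> nat set set" where
  "orbits n g = {orbit g x | x. x < n}"

lemma cycle_type_orbits: "cycle_type n g = image_mset card (mset_set (orbits n g))"
  by (simp add: cycle_type_def orbits_def)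

lemma finite_orbits: "finite (orbits n g)"
proof -
  have "orbits n g = (\<lambda>x. orbit g x) ` {..<n}" by (auto simp: orbits_def)
  thus ?thesis by simp
qed

lemma size_cycle_type: "size (cycle_type n g) = card (orbits n g)"
  by (simp add: cycle_type_orbits)

lemma orbit_eq_if_mem: "permutation g \<Longrightarrow> y \<in> orbit g x \<Longrightarrow> orbit g y = orbit g x"
  by (rule orbit_cyclic_eq3[OF cyclic_on_orbit'])

lemma partition_on_orbits:
  assumes perm: "g permutes {..<n}"
  shows "partition_on {..<n} (orbits n g)"
proof (rule partition_onI)
  have g: "permutation g" using perm by (auto simp: permutation_permutes)
  show "\<Union>(orbits n g) = {..<n}"
    using permutes_orbit_subset[OF perm] permutation_self_in_orbit[OF g]
    by (fastforce simp: orbits_def)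
  show "disjnt A B" if AB: "A \<in> orbits n g" "B \<in> orbits n g" "A \<noteq> B" for A B
  proof (rule ccontr)
    assume "\<not> disjnt A B"
    then obtain z where z: "z \<in> A" "z \<in> B" by (auto simp: disjnt_def)
    obtain x y where A: "A = orbit g x" and B: "B = orbit g y"
      using AB by (auto simp: orbits_def)
    have "A = orbit g z" using orbit_eq_if_mem[OF g, of z x] z(1) A by simp
    moreover have "B = orbit g z" using orbit_eq_if_mem[OF g, of z y] z(2) B by simp
    ultimately show False using \<open>A \<noteq> B\<close> by simp
  qed
  show "{} \<notin> orbits n g"
    using orbit_nonempty by (fastforce simp: orbits_def)
qed

lemma cycle_type_partition:
  assumes perm: "g permutes {..<n}"
  shows "cycle_type n g \<in> partitions n"
proof -
  have P: "partition_on {..<n} (orbits n g)" by (rule partition_on_orbits[OF perm])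
  have fin: "finite X" if "X \<in> orbits n g" for X
    using that partition_onD1[OF P] by (auto intro: finite_subset)
  have "sum card (orbits n g) = card (\<Union>(orbits n g))"
    using partition_onD2[OF P] fin by (intro card_Union_disjoint[symmetric]) auto
  hence "sum_mset (cycle_type n g) = n"
    using partition_onD1[OF P, symmetric] by (simp add: cycle_type_orbits sum_unfold_sum_mset)
  moreover have "0 < card X" if "X \<in> orbits n g" for X
    using that fin partition_onD3[OF P] by (auto simp: card_gt_0_iff)
  ultimately show ?thesis
    by (auto simp: partitions_def cycle_type_orbits finite_orbits)
qed

lemma refines_orbits_funpow:
  assumes perm: "\<sigma> permutes {..<n}"
  shows "refines {..<n} (orbits n (\<sigma> ^^ k)) (orbits n \<sigma>)"
proof -
  have "orbit (\<sigma> ^^ k) x \<subseteq> orbit \<sigma> x" for x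
  proof
    have "permutation \<sigma>" using perm by (auto simp: permutation_permutes)
    hence self: "x \<in> orbit \<sigma> x" by (rule permutation_self_in_orbit)
    fix y assume "y \<in> orbit (\<sigma> ^^ k) x"
    thus "y \<in> orbit \<sigma> x"
    proof induction
      case base
      thus ?case by (rule funpow_in_orbit[OF self])
    next
      case (step y)
      thus ?case by (simp add: funpow_in_orbit)
    qed
  qed
  thus ?thesis
    using partition_on_orbits[OF perm] partition_on_orbits[OF permutes_funpow[OF perm]]
    by (auto simp: refines_def orbits_def)
qed

lemma cycle_type_funpow:
  assumes perm: "\<sigma> permutes {..<n}"
  shows "cycle_type n (\<sigma> ^^ k) = cycle_type n \<sigma> \<or>
         size (cycle_type n \<sigma>) < size (cycle_type n (\<sigma> ^^ k))"
proof -
  have "card (orbits n \<sigma>) \<le> card (orbits n (\<sigma> ^^ k))"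
    and eq: "card (orbits n \<sigma>) = card (orbits n (\<sigma> ^^ k)) \<Longrightarrow> orbits n (\<sigma> ^^ k) = orbits n \<sigma>"
    using refines_card[OF refines_orbits_funpow[OF perm]] by auto
  thus ?thesis by (cases "card (orbits n \<sigma>) = card (orbits n (\<sigma> ^^ k))")
      (auto simp: size_cycle_type cycle_type_orbits)
qed

lemma orbit_cycle_of_list_upt:
  assumes a: "0 < a" and x: "x \<in> {n..<n + a}"
  shows "orbit (cycle_of_list [n..<n + a]) x = {n..<n + a}"
proof -
  let ?cs = "[n..<n + a]"
  let ?c = "cycle_of_list ?cs"
  have c: "permutation ?c" by (rule permutation_of_cycle)
  have rot: "(?c ^^ k) (?cs ! i) = ?cs ! ((k + i) mod a)" if "i < a" for k i
  proof -
    have "(?c ^^ k) (?cs ! i) = map (?c ^^ k) ?cs ! i" using that by simp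
    also have "\<dots> = ?cs ! ((k + i) mod a)" using that by (simp add: cyclic_rotation nth_rotate)
    finally show ?thesis .
  qed
  define i where "i = x - n"
  have i: "i < a" "x = ?cs ! i" using x by (auto simp: i_def)
  show ?thesis
  proof
    show "orbit ?c x \<subseteq> {n..<n + a}"
      using rot i a by (auto simp: orbit_altdef_permutation[OF c])
    show "{n..<n + a} \<subseteq> orbit ?c x"
    proof
      fix y assume "y \<in> {n..<n + a}"
      then obtain d where d: "d < a" "y = n + d"
        by (metis atLeastLessThan_iff le_Suc_ex add_less_cancel_left)
      have "(?c ^^ (d + a - i)) x = ?cs ! ((d + a - i + i) mod a)" using rot i by simp
      also have "\<dots> = y" using i d by simp
      finally show "y \<in> orbit ?c x" by (auto simp: orbit_altdef_permutation[OF c])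
    qed
  qed
qed

lemma orbits_compose_cycle:
  assumes \<sigma>': "\<sigma>' permutes {..<n}" and a: "0 < a"
  defines "\<sigma> \<equiv> \<sigma>' \<circ> cycle_of_list [n..<n + a]"
  shows "\<sigma> permutes {..<n + a}" and "orbits (n + a) \<sigma> = insert {n..<n + a} (orbits n \<sigma>')"
proof -
  let ?c = "cycle_of_list [n..<n + a]"
  have c: "?c permutes {n..<n + a}" using cycle_permutes[of "[n..<n + a]"] by simp
  show "\<sigma> permutes {..<n + a}"
    unfolding \<sigma>_def
    by (rule permutes_compose; rule permutes_subset[OF c] permutes_subset[OF \<sigma>']) auto
  have low: "\<sigma> x = \<sigma>' x" if "x < n" for x
    using that by (simp add: \<sigma>_def id_outside_supp)
  have high: "\<sigma> x = ?c x" if "n \<le> x" for x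
  proof -
    have "n \<le> ?c x"
      using that permutes_in_image[OF c, of x] by (cases "x < n + a") (auto simp: id_outside_supp)
    thus ?thesis by (simp add: \<sigma>_def permutes_not_in[OF \<sigma>'])
  qed
  have orbit_low: "orbit \<sigma> x = orbit \<sigma>' x" if "x < n" for x
    using that low permutes_in_image[OF \<sigma>'] by (intro orbit_cong0[of x "{..<n}"]) auto
  have orbit_high: "orbit \<sigma> x = {n..<n + a}" if "x \<in> {n..<n + a}" for x
  proof -
    have "orbit ?c x = orbit \<sigma> x"
      using that high permutes_in_image[OF c] by (intro orbit_cong0[of x "{n..<n + a}"]) auto
    thus ?thesis using orbit_cycle_of_list_upt[OF a that] by simp
  qed
  show "orbits (n + a) \<sigma> = insert {n..<n + a} (orbits n \<sigma>')"
  proof (intro equalityI subsetI)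
    fix Q assume "Q \<in> orbits (n + a) \<sigma>"
    then obtain x where "x < n + a" "Q = orbit \<sigma> x" by (auto simp: orbits_def)
    thus "Q \<in> insert {n..<n + a} (orbits n \<sigma>')"
      using orbit_low orbit_high by (cases "x < n") (auto simp: orbits_def)
  next
    fix Q assume "Q \<in> insert {n..<n + a} (orbits n \<sigma>')"
    then consider "Q = orbit \<sigma> n" | x where "x < n" "Q = orbit \<sigma> x"
      using orbit_low orbit_high[of n] a by (auto simp: orbits_def)
    thus "Q \<in> orbits (n + a) \<sigma>"
      using a by cases (auto simp: orbits_def)
  qed
qed

lemma exists_perm_with_cycle_type:
  assumes "\<forall>x\<in>#\<beta>. 0 < x"
  shows "\<exists>\<sigma>. \<sigma> permutes {..<sum_mset \<beta>} \<and> cycle_type (sum_mset \<beta>) \<sigma> = \<beta>"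
  using assms
proof (induction \<beta>)
  case empty
  have "cycle_type 0 id = {#}" by (simp add: cycle_type_orbits orbits_def)
  thus ?case using permutes_id by fastforce
next
  case (add a \<beta>)
  then obtain \<sigma>' where \<sigma>': "\<sigma>' permutes {..<sum_mset \<beta>}" "cycle_type (sum_mset \<beta>) \<sigma>' = \<beta>"
    by auto
  let ?n = "sum_mset \<beta>"
  have a: "0 < a" using add.prems by simp
  have new: "{?n..<?n + a} \<notin> orbits ?n \<sigma>'"
    using a permutes_orbit_subset[OF \<sigma>'(1)] by (fastforce simp: orbits_def)
  obtain \<sigma> where "\<sigma> permutes {..<?n + a}" "orbits (?n + a) \<sigma> = insert {?n..<?n + a} (orbits ?n \<sigma>')"
    using orbits_compose_cycle[OF \<sigma>'(1) a] by blast
  thus ?case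
    using new \<sigma>'(2) finite_orbits by (intro exI[of _ \<sigma>]) (simp add: cycle_type_orbits add.commute)
qed

lemma perm_of_type_cycle_type:
  assumes "\<alpha> \<in> partitions n"
  shows "perm_of_type \<alpha> permutes {..<n}" "cycle_type n (perm_of_type \<alpha>) = \<alpha>"
proof -
  have "\<exists>\<sigma>. \<sigma> permutes {0..<sum_mset \<alpha>} \<and> cycle_type (sum_mset \<alpha>) \<sigma> = \<alpha>"
    using exists_perm_with_cycle_type[of \<alpha>] assms by (simp add: partitions_def atLeast0LessThan)
  hence "perm_of_type \<alpha> permutes {0..<sum_mset \<alpha>} \<and> cycle_type (sum_mset \<alpha>) (perm_of_type \<alpha>) = \<alpha>"
    unfolding perm_of_type_def by (rule someI_ex)
  thus "perm_of_type \<alpha> permutes {..<n}" "cycle_type n (perm_of_type \<alpha>) = \<alpha>"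
    using partitions_sum_mset[OF assms] by (auto simp: atLeast0LessThan)
qed

lemma finite_perm_powers: "\<sigma> permutes {..<n} \<Longrightarrow> finite (perm_powers \<sigma>)"
  using permutes_funpow finite_permutations[of "{..<n}"]
  by (auto simp: perm_powers_def intro: finite_subset[of _ "{p. p permutes {..<n}}"])

lemma p_triangular_ser_C:
  assumes \<alpha>: "\<alpha> \<in> partitions n"
  shows "p_triangular n \<alpha> (ser_C \<alpha>)"
proof -
  let ?\<sigma> = "perm_of_type \<alpha>"
  let ?G = "perm_powers ?\<sigma>"
  have \<sigma>: "?\<sigma> permutes {..<n}" "cycle_type n ?\<sigma> = \<alpha>"
    using perm_of_type_cycle_type[OF \<alpha>] by auto
  have fin: "finite ?G" using finite_perm_powers[OF \<sigma>(1)] .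
  have \<sigma>_in: "?\<sigma> \<in> ?G" by (auto simp: perm_powers_def intro: exI[of _ 1])
  have "p_triangular n \<alpha> (\<Sum>g\<in>?G. ser_const (1 / of_nat (card ?G)) * ser_ppart (cycle_type n g))"
  proof (rule p_triangular_sumI[OF fin _ _ _ \<sigma>_in])
    fix g assume "g \<in> ?G"
    then obtain k where g: "g = ?\<sigma> ^^ k" by (auto simp: perm_powers_def)
    show "cycle_type n g \<in> partitions n"
      unfolding g by (rule cycle_type_partition[OF permutes_funpow[OF \<sigma>(1)]])
    show "cycle_type n g = \<alpha> \<or> size \<alpha> < size (cycle_type n g)"
      using cycle_type_funpow[OF \<sigma>(1), of k] \<sigma>(2) g by auto
  qed (use fin \<sigma>_in \<sigma>(2) in \<open>auto simp: card_gt_0_iff\<close>)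
  thus ?thesis using partitions_sum_mset[OF \<alpha>] by (simp add: ser_C_def Let_def)
qed

lemma sum_replicate_count: "(\<Sum>i\<in>set_mset \<alpha>. replicate_mset (count \<alpha> i) i) = \<alpha>"
  by (rule multiset_eqI) (simp add: count_sum count_eq_zero_iff)

lemma p_triangular_ser_K:
  assumes \<alpha>: "\<alpha> \<in> partitions n"
  shows "p_triangular n \<alpha> (ser_K \<alpha>)"
proof -
  let ?block = "\<lambda>i. replicate_mset (count \<alpha> i) i"
  have "p_triangular (\<Sum>i\<in>set_mset \<alpha>. sum_mset (?block i)) (\<Sum>i\<in>set_mset \<alpha>. ?block i)
          (\<Prod>i\<in>set_mset \<alpha>. ser_C (?block i))"
    using partitions_pos[OF \<alpha>]
    by (intro p_triangular_prod p_triangular_ser_C) (auto simp: partitions_def)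
  hence K: "p_triangular (\<Sum>i\<in>set_mset \<alpha>. sum_mset (?block i)) \<alpha> (ser_K \<alpha>)"
    by (simp add: ser_K_def sum_replicate_count)
  have "(\<Sum>i\<in>set_mset \<alpha>. sum_mset (?block i)) = n"
    using K partitions_sum_mset[OF \<alpha>] by (auto simp: p_triangular_def partitions_def)
  thus ?thesis using K by simp
qed

section \<open>Triangular changes of basis\<close>

definition lin_span :: "'i set \<Rightarrow> ('i \<Rightarrow> 'a \<Rightarrow> 'f :: comm_ring) \<Rightarrow> ('a \<Rightarrow> 'f) set" where
  "lin_span I b = {f. \<exists>c. \<forall>m. f m = (\<Sum>\<alpha>\<in>I. c \<alpha> * b \<alpha> m)}"

definition lin_indep :: "'i set \<Rightarrow> ('i \<Rightarrow> 'a \<Rightarrow> 'f :: comm_ring) \<Rightarrow> bool" where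
  "lin_indep I b \<longleftrightarrow> (\<forall>c. (\<forall>m. (\<Sum>\<alpha>\<in>I. c \<alpha> * b \<alpha> m) = 0) \<longrightarrow> (\<forall>\<alpha>\<in>I. c \<alpha> = 0))"

lemma lin_span_lincomb:
  assumes "finite J" "\<And>j. j \<in> J \<Longrightarrow> g j \<in> lin_span I b"
  shows "(\<lambda>m. \<Sum>j\<in>J. w j * g j m) \<in> lin_span I b"
proof -
  have "\<forall>j\<in>J. \<exists>c. \<forall>m. g j m = (\<Sum>\<alpha>\<in>I. c \<alpha> * b \<alpha> m)"
    using assms(2) by (simp add: lin_span_def)
  then obtain c where c: "\<And>j m. j \<in> J \<Longrightarrow> g j m = (\<Sum>\<alpha>\<in>I. c j \<alpha> * b \<alpha> m)"
    by (metis bchoice)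
  have "(\<Sum>j\<in>J. w j * g j m) = (\<Sum>\<alpha>\<in>I. (\<Sum>j\<in>J. w j * c j \<alpha>) * b \<alpha> m)" for m
  proof -
    have "(\<Sum>j\<in>J. w j * g j m) = (\<Sum>j\<in>J. \<Sum>\<alpha>\<in>I. w j * c j \<alpha> * b \<alpha> m)"
      by (simp add: c sum_distrib_left mult.assoc)
    also have "\<dots> = (\<Sum>\<alpha>\<in>I. (\<Sum>j\<in>J. w j * c j \<alpha>) * b \<alpha> m)"
      by (subst sum.swap) (simp add: sum_distrib_right)
    finally show ?thesis .
  qed
  thus ?thesis
    unfolding lin_span_def by (intro CollectI exI[of _ "\<lambda>\<alpha>. \<Sum>j\<in>J. w j * c j \<alpha>"]) simp
qed

lemma lin_span_subset:
  assumes "finite J" "\<And>j. j \<in> J \<Longrightarrow> g j \<in> lin_span I b"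
  shows "lin_span J g \<subseteq> lin_span I b"
proof
  fix f assume "f \<in> lin_span J g"
  then obtain w where "f = (\<lambda>m. \<Sum>j\<in>J. w j * g j m)" by (auto simp: lin_span_def)
  thus "f \<in> lin_span I b" using lin_span_lincomb[OF assms] by simp
qed

lemma lin_span_gen:
  fixes b :: "'i \<Rightarrow> 'a \<Rightarrow> 'f :: comm_ring_1"
  assumes "finite I" "\<alpha> \<in> I"
  shows "b \<alpha> \<in> lin_span I b"
proof -
  have "b \<alpha> m = (\<Sum>\<beta>\<in>I. of_bool (\<beta> = \<alpha>) * b \<beta> m)" for m
    using assms by simp
  thus ?thesis unfolding lin_span_def by (intro CollectI exI[of _ "\<lambda>\<beta>. of_bool (\<beta> = \<alpha>)"]) simp
qed

context
  fixes I :: "'i set" and r :: "'i \<Rightarrow> nat" and T :: "'i \<Rightarrow> 'i \<Rightarrow> 'f :: field"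
    and b e :: "'i \<Rightarrow> 'a \<Rightarrow> 'f"
  assumes finite: "finite I"
    and expand: "\<And>\<alpha> m. \<alpha> \<in> I \<Longrightarrow> b \<alpha> m = (\<Sum>\<beta>\<in>I. T \<alpha> \<beta> * e \<beta> m)"
    and diag: "\<And>\<alpha>. \<alpha> \<in> I \<Longrightarrow> T \<alpha> \<alpha> \<noteq> 0"
    and triangular: "\<And>\<alpha> \<beta>. \<alpha> \<in> I \<Longrightarrow> \<beta> \<in> I \<Longrightarrow> T \<alpha> \<beta> \<noteq> 0 \<Longrightarrow> \<beta> = \<alpha> \<or> r \<beta> < r \<alpha>"
begin

lemma triangular_lin_indep:
  assumes indep: "lin_indep I e"
  shows "lin_indep I b"
  unfolding lin_indep_def
proof (intro allI impI ballI, rule ccontr)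
  fix c \<alpha>
  assume zero: "\<forall>m. (\<Sum>\<alpha>\<in>I. c \<alpha> * b \<alpha> m) = 0" and "\<alpha> \<in> I" "c \<alpha> \<noteq> 0"
  let ?Z = "{\<alpha> \<in> I. c \<alpha> \<noteq> 0}"
  have Z: "finite ?Z" "?Z \<noteq> {}" using finite \<open>\<alpha> \<in> I\<close> \<open>c \<alpha> \<noteq> 0\<close> by auto
  hence "Max (r ` ?Z) \<in> r ` ?Z" by simp
  then obtain \<alpha>0 where \<alpha>0: "\<alpha>0 \<in> ?Z" "r \<alpha>0 = Max (r ` ?Z)" by auto
  hence max: "r \<alpha> \<le> r \<alpha>0" if "\<alpha> \<in> ?Z" for \<alpha> using Z that by simp
  define d where "d \<beta> = (\<Sum>\<alpha>\<in>I. c \<alpha> * T \<alpha> \<beta>)" for \<beta>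
  have "(\<Sum>\<beta>\<in>I. d \<beta> * e \<beta> m) = (\<Sum>\<alpha>\<in>I. c \<alpha> * b \<alpha> m)" for m
  proof -
    have "(\<Sum>\<beta>\<in>I. d \<beta> * e \<beta> m) = (\<Sum>\<beta>\<in>I. \<Sum>\<alpha>\<in>I. c \<alpha> * (T \<alpha> \<beta> * e \<beta> m))"
      by (simp add: d_def sum_distrib_right mult.assoc)
    also have "\<dots> = (\<Sum>\<alpha>\<in>I. c \<alpha> * b \<alpha> m)"
      by (subst sum.swap) (simp add: expand sum_distrib_left)
    finally show ?thesis .
  qed
  hence "d \<alpha>0 = 0" using indep zero \<alpha>0(1) by (simp add: lin_indep_def)
  moreover have "d \<alpha>0 = (\<Sum>\<alpha>\<in>I. if \<alpha> = \<alpha>0 then c \<alpha>0 * T \<alpha>0 \<alpha>0 else 0)"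
    unfolding d_def
  proof (intro sum.cong refl)
    fix \<alpha> assume "\<alpha> \<in> I"
    show "c \<alpha> * T \<alpha> \<alpha>0 = (if \<alpha> = \<alpha>0 then c \<alpha>0 * T \<alpha>0 \<alpha>0 else 0)"
      using triangular[OF \<open>\<alpha> \<in> I\<close>, of \<alpha>0] max[of \<alpha>] \<alpha>0(1) \<open>\<alpha> \<in> I\<close>
      by (cases "\<alpha> = \<alpha>0") (auto simp: not_le[symmetric])
  qed
  ultimately show False using \<alpha>0(1) diag finite by simp
qed

lemma triangular_span:
  assumes "\<beta> \<in> I"
  shows "e \<beta> \<in> lin_span I b"
  using assms
proof (induction "r \<beta>" arbitrary: \<beta> rule: less_induct)
  case less
  let ?J = "{\<gamma> \<in> I. \<gamma> \<noteq> \<beta> \<and> T \<beta> \<gamma> \<noteq> 0}"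
  let ?g = "\<lambda>j. if j = \<beta> then b \<beta> else e j"
  let ?w = "\<lambda>j. if j = \<beta> then 1 / T \<beta> \<beta> else - T \<beta> j / T \<beta> \<beta>"
  have J: "finite ?J" "\<beta> \<notin> ?J" using finite by auto
  have "b \<beta> m = (\<Sum>\<gamma>\<in>insert \<beta> ?J. T \<beta> \<gamma> * e \<gamma> m)" for m
    unfolding expand[OF less.prems]
    by (rule sum.mono_neutral_right) (use finite less.prems in auto)
  hence "b \<beta> m = T \<beta> \<beta> * e \<beta> m + (\<Sum>\<gamma>\<in>?J. T \<beta> \<gamma> * e \<gamma> m)" for m
    using J by simp
  hence "e \<beta> m = (\<Sum>j\<in>insert \<beta> ?J. ?w j * ?g j m)" for m
    using J diag[OF less.prems]
    by (simp add: sum_divide_distrib[symmetric] sum_negf divide_simps mult.commute)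
  hence "e \<beta> = (\<lambda>m. \<Sum>j\<in>insert \<beta> ?J. ?w j * ?g j m)" ..
  also have "\<dots> \<in> lin_span I b"
  proof (rule lin_span_lincomb)
    show "finite (insert \<beta> ?J)" using J by simp
    fix j assume j: "j \<in> insert \<beta> ?J"
    show "?g j \<in> lin_span I b"
    proof (cases "j = \<beta>")
      case True
      thus ?thesis using lin_span_gen[OF finite less.prems] by simp
    next
      case False
      hence "r j < r \<beta>" using triangular[OF less.prems, of j] j by auto
      thus ?thesis using less.hyps j False by simp
    qed
  qed
  finally show ?case .
qed

end

lemma Lambda_symmetric: "f \<in> Lambda n \<Longrightarrow> bij \<sigma> \<Longrightarrow> f (m \<circ> \<sigma>) = f m"
  by (simp add: Lambda_def)

lemma Lambda_support: "f \<in> Lambda n \<Longrightarrow> f m \<noteq> 0 \<Longrightarrow> fin_mono m \<and> mdeg m = n"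
  by (simp add: Lambda_def)

lemma Lambda_lincomb:
  assumes "\<And>i. i \<in> I \<Longrightarrow> e i \<in> Lambda n"
  shows "(\<lambda>m. \<Sum>i\<in>I. c i * e i m) \<in> Lambda n"
  unfolding Lambda_def mem_Collect_eq
proof (rule conjI; intro allI impI)
  fix m assume "(\<Sum>i\<in>I. c i * e i m) \<noteq> 0"
  then obtain i where i: "i \<in> I" "c i * e i m \<noteq> 0"
    by (rule sum.not_neutral_contains_not_neutral)
  thus "fin_mono m \<and> mdeg m = n" using Lambda_support[OF assms[OF i(1)], of m] by simp
next
  fix \<sigma> :: "nat \<Rightarrow> nat" and m assume "bij \<sigma>"
  thus "(\<Sum>i\<in>I. c i * e i (m \<circ> \<sigma>)) = (\<Sum>i\<in>I. c i * e i m)"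
    using Lambda_symmetric[OF assms] by simp
qed

lemma is_basis_Lambda_iff:
  "is_basis_Lambda n b \<longleftrightarrow>
     (\<forall>\<alpha>\<in>partitions n. b \<alpha> \<in> Lambda n) \<and> lin_indep (partitions n) b \<and>
     Lambda n \<subseteq> lin_span (partitions n) b"
  by (auto simp: is_basis_Lambda_def lin_indep_def lin_span_def)

lemma is_basis_Lambda_triangular:
  fixes r :: "nat multiset \<Rightarrow> nat"
  assumes e: "is_basis_Lambda n e"
    and expand: "\<And>\<alpha> m. \<alpha> \<in> partitions n \<Longrightarrow> b \<alpha> m = (\<Sum>\<beta>\<in>partitions n. T \<alpha> \<beta> * e \<beta> m)"
    and diag: "\<And>\<alpha>. \<alpha> \<in> partitions n \<Longrightarrow> T \<alpha> \<alpha> \<noteq> 0"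
    and triangular: "\<And>\<alpha> \<beta>. \<alpha> \<in> partitions n \<Longrightarrow> \<beta> \<in> partitions n \<Longrightarrow> T \<alpha> \<beta> \<noteq> 0 \<Longrightarrow>
                       \<beta> = \<alpha> \<or> r \<beta> < r \<alpha>"
  shows "is_basis_Lambda n b"
  unfolding is_basis_Lambda_iff
proof (intro conjI ballI)
  fix \<alpha> assume "\<alpha> \<in> partitions n"
  hence "b \<alpha> = (\<lambda>m. \<Sum>\<beta>\<in>partitions n. T \<alpha> \<beta> * e \<beta> m)" using expand by blast
  moreover have "(\<lambda>m. \<Sum>\<beta>\<in>partitions n. T \<alpha> \<beta> * e \<beta> m) \<in> Lambda n"
    using e by (intro Lambda_lincomb) (simp add: is_basis_Lambda_iff)
  ultimately show "b \<alpha> \<in> Lambda n" by simp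
next
  show "lin_indep (partitions n) b"
    using triangular_lin_indep[where I = "partitions n" and b = b and e = e and T = T and r = r,
        OF finite_partitions expand diag triangular] e
    by (simp add: is_basis_Lambda_iff)
next
  have "lin_span (partitions n) e \<subseteq> lin_span (partitions n) b"
    using triangular_span[where I = "partitions n" and b = b and e = e and T = T and r = r,
        OF finite_partitions expand diag triangular]
    by (intro lin_span_subset finite_partitions)
  moreover have "Lambda n \<subseteq> lin_span (partitions n) e"
    using e by (simp add: is_basis_Lambda_iff)
  ultimately show "Lambda n \<subseteq> lin_span (partitions n) b" by (rule order.trans[rotated])
qed

section \<open>Monomial symmetric functions\<close>

definition mono_shape :: "mono \<Rightarrow> nat multiset" where
  "mono_shape m = image_mset m (mset_set {i. m i \<noteq> 0})"

definition shape_mono :: "nat multiset \<Rightarrow> mono" where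
  "shape_mono \<beta> = (\<lambda>i. if i < size \<beta> then sorted_list_of_multiset \<beta> ! i else 0)"

definition sf_m :: "nat multiset \<Rightarrow> sfun" where
  "sf_m \<beta> m = (if fin_mono m \<and> mono_shape m = \<beta> then 1 else 0)"

lemma mono_shape_pos: "x \<in># mono_shape m \<Longrightarrow> 0 < x"
  by (cases "finite {i. m i \<noteq> 0}") (auto simp: mono_shape_def)

lemma sum_mset_mono_shape: "fin_mono m \<Longrightarrow> sum_mset (mono_shape m) = mdeg m"
  by (simp add: mono_shape_def mdeg_def sum_unfold_sum_mset)

lemma mono_shape_partition: "fin_mono m \<Longrightarrow> mono_shape m \<in> partitions (mdeg m)"
  using mono_shape_pos sum_mset_mono_shape by (auto simp: partitions_def)

lemma shape_mono_has_shape: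
  assumes pos: "\<forall>x\<in>#\<beta>. 0 < x"
  shows "fin_mono (shape_mono \<beta>)" "mono_shape (shape_mono \<beta>) = \<beta>"
proof -
  let ?xs = "sorted_list_of_multiset \<beta>"
  have len: "length ?xs = size \<beta>" by (metis mset_sorted_list_of_multiset size_mset)
  have supp: "{i. shape_mono \<beta> i \<noteq> 0} = {..<size \<beta>}"
  proof (intro equalityI subsetI)
    fix i assume "i \<in> {..<size \<beta>}"
    hence "?xs ! i \<in> set ?xs" using len by (intro nth_mem) simp
    hence "0 < ?xs ! i" using pos by simp
    thus "i \<in> {i. shape_mono \<beta> i \<noteq> 0}" using \<open>i \<in> {..<size \<beta>}\<close> by (simp add: shape_mono_def)
  qed (auto simp: shape_mono_def split: if_splits)
  thus "fin_mono (shape_mono \<beta>)" by (simp add: fin_mono_def)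
  have "mono_shape (shape_mono \<beta>) = mset (map (shape_mono \<beta>) [0..<size \<beta>])"
    unfolding mono_shape_def supp by (simp add: atLeast0LessThan[symmetric])
  also have "map (shape_mono \<beta>) [0..<size \<beta>] = ?xs"
    using len by (intro nth_equalityI) (auto simp: shape_mono_def)
  finally show "mono_shape (shape_mono \<beta>) = \<beta>" by simp
qed

lemma mono_shape_comp_bij:
  assumes "bij \<sigma>"
  shows "mono_shape (m \<circ> \<sigma>) = mono_shape m" and "fin_mono (m \<circ> \<sigma>) \<longleftrightarrow> fin_mono m"
proof -
  let ?S = "{i. m i \<noteq> 0}"
  have supp: "{i. (m \<circ> \<sigma>) i \<noteq> 0} = \<sigma> -` ?S" by auto
  have inj: "inj \<sigma>" using assms by (rule bij_is_inj)
  have im: "\<sigma> ` (\<sigma> -` ?S) = ?S"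
    using bij_is_surj[OF assms] by (simp only: image_vimage_eq Int_UNIV_right)
  have "image_mset \<sigma> (mset_set (\<sigma> -` ?S)) = mset_set ?S"
    using inj im by (subst image_mset_mset_set) (auto intro: inj_on_subset)
  thus "mono_shape (m \<circ> \<sigma>) = mono_shape m"
    by (simp add: mono_shape_def supp image_mset.compositionality[symmetric])
  have "finite (\<sigma> -` ?S) \<longleftrightarrow> finite ?S"
  proof
    assume "finite (\<sigma> -` ?S)"
    thus "finite ?S" using im finite_imageI[of _ \<sigma>] by metis
  next
    assume "finite ?S"
    thus "finite (\<sigma> -` ?S)" using inj by (rule finite_vimageI)
  qed
  thus "fin_mono (m \<circ> \<sigma>) \<longleftrightarrow> fin_mono m" by (simp add: fin_mono_def supp)
qed

lemma mono_shape_fun_upd_0: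
  assumes "fin_mono m"
  shows "mono_shape m = (if m j = 0 then {#} else {#m j#}) + mono_shape (m(j := 0))"
proof -
  let ?S = "{i. m i \<noteq> 0}"
  have S: "finite ?S" using assms by (simp add: fin_mono_def)
  have supp: "{i. (m(j := 0)) i \<noteq> 0} = ?S - {j}" by auto
  have "mono_shape (m(j := 0)) = image_mset m (mset_set (?S - {j}))"
    unfolding mono_shape_def supp by (intro image_mset_cong) (use S in auto)
  moreover have "mset_set ?S = (if m j = 0 then {#} else {#j#}) + mset_set (?S - {j})"
    using S by (cases "m j = 0") (auto intro: mset_set.remove)
  ultimately show ?thesis by (simp add: mono_shape_def)
qed

lemma bij_betw_extend_bij:
  fixes g :: "'a \<Rightarrow> 'a"
  assumes "finite A" "finite B" "bij_betw g A B"
  obtains \<sigma> where "bij \<sigma>" "\<And>x. x \<in> A \<Longrightarrow> \<sigma> x = g x"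
proof -
  let ?F = "A \<union> B"
  have "card (?F - A) = card (?F - B)"
    using assms bij_betw_same_card[OF assms(3)] by (simp add: card_Diff_subset)
  then obtain h where h: "bij_betw h (?F - A) (?F - B)"
    using finite_same_card_bij[of "?F - A" "?F - B"] assms by auto
  define \<sigma> where "\<sigma> x = (if x \<in> A then g x else if x \<in> ?F then h x else x)" for x
  have "bij_betw \<sigma> A B"
    using assms(3) by (rule bij_betw_cong[THEN iffD1, rotated]) (simp add: \<sigma>_def)
  moreover have "bij_betw \<sigma> (?F - A) (?F - B)"
    using h by (rule bij_betw_cong[THEN iffD1, rotated]) (auto simp: \<sigma>_def)
  ultimately have "bij_betw \<sigma> ?F ?F"
    using bij_betw_combine[of \<sigma> A B "?F - A" "?F - B"] by (simp add: Un_absorb1 sup.absorb2)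
  hence "\<sigma> permutes ?F" by (rule bij_imp_permutes) (simp add: \<sigma>_def)
  hence "bij \<sigma>" by (rule permutes_bij)
  thus ?thesis using that[of \<sigma>] by (simp add: \<sigma>_def)
qed

lemma exists_bij_comp_shape_mono:
  assumes fin: "fin_mono m"
  obtains \<sigma> where "bij \<sigma>" "m \<circ> \<sigma> = shape_mono (mono_shape m)"
proof -
  let ?S = "{i. m i \<noteq> 0}"
  have S: "finite ?S" using fin by (simp add: fin_mono_def)
  define ls where "ls = sorted_list_of_set ?S"
  have ls: "distinct ls" "set ls = ?S" using S by (auto simp: ls_def)
  have "mset ls = mset_set ?S" using ls mset_set_set[of ls] by simp
  hence mset_ls: "mset (map m ls) = mono_shape m" by (simp add: mono_shape_def)
  define xs where "xs = sorted_list_of_multiset (mono_shape m)"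
  have "mset xs = mset (map m ls)" unfolding xs_def mset_ls by simp
  then obtain p where p: "p permutes {..<length ls}" "permute_list p (map m ls) = xs"
    by (metis length_map mset_eq_permutation)
  let ?k = "length ls"
  have size: "size (mono_shape m) = ?k" by (metis mset_ls length_map size_mset)
  have g: "bij_betw (\<lambda>i. ls ! p i) {..<?k} ?S"
    using permutes_imp_bij[OF p(1)] bij_betw_nth[OF ls(1), of "{..<?k}"] ls(2)
    by (auto intro: bij_betw_trans[unfolded comp_def])
  then obtain \<sigma> where \<sigma>: "bij \<sigma>" "\<And>i. i < ?k \<Longrightarrow> \<sigma> i = ls ! p i"
    using bij_betw_extend_bij[OF _ S] by (metis finite_lessThan lessThan_iff)
  have "m (\<sigma> i) = shape_mono (mono_shape m) i" for i
  proof (cases "i < ?k")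
    case True
    have "permute_list p (map m ls) ! i = map m ls ! p i"
      using p(1) True by (simp add: permute_list_nth)
    hence "m (\<sigma> i) = permute_list p (map m ls) ! i"
      using True \<sigma>(2) permutes_in_image[OF p(1)] by simp
    thus ?thesis using True p(2) size by (simp add: shape_mono_def xs_def)
  next
    case False
    have "\<sigma> ` {..<?k} = (\<lambda>i. ls ! p i) ` {..<?k}" using \<sigma>(2) by (intro image_cong) auto
    hence "\<sigma> ` {..<?k} = ?S" using bij_betw_imp_surj_on[OF g] by simp
    hence "\<sigma> i \<notin> ?S"
      using False inj_image_mem_iff[OF bij_is_inj[OF \<sigma>(1)], of i "{..<?k}"] by simp
    thus ?thesis using False size by (simp add: shape_mono_def)
  qed
  thus ?thesis using that \<sigma>(1) by (auto simp: fun_eq_iff)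
qed

lemma Lambda_eq_at_shape_mono:
  assumes "f \<in> Lambda n" "fin_mono m"
  shows "f m = f (shape_mono (mono_shape m))"
proof -
  obtain \<sigma> where "bij \<sigma>" "m \<circ> \<sigma> = shape_mono (mono_shape m)"
    using exists_bij_comp_shape_mono[OF assms(2)] .
  thus ?thesis using Lambda_symmetric[OF assms(1)] by metis
qed

lemma sf_m_Lambda:
  assumes "\<beta> \<in> partitions n"
  shows "sf_m \<beta> \<in> Lambda n"
  unfolding Lambda_def mem_Collect_eq
proof (rule conjI; intro allI impI)
  fix m assume "sf_m \<beta> m \<noteq> 0"
  hence "fin_mono m" "mono_shape m = \<beta>" by (auto simp: sf_m_def split: if_splits)
  thus "fin_mono m \<and> mdeg m = n"
    using partitions_sum_mset[OF assms] sum_mset_mono_shape by auto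
next
  fix \<sigma> :: "nat \<Rightarrow> nat" and m assume "bij \<sigma>"
  thus "sf_m \<beta> (m \<circ> \<sigma>) = sf_m \<beta> m" by (simp add: sf_m_def mono_shape_comp_bij)
qed

lemma sf_m_shape_mono: "\<alpha> \<in> partitions n \<Longrightarrow> sf_m \<beta> (shape_mono \<alpha>) = of_bool (\<beta> = \<alpha>)"
  using shape_mono_has_shape[of \<alpha>] by (auto simp: sf_m_def partitions_def)

lemma Lambda_expand_sf_m:
  assumes f: "f \<in> Lambda n"
  shows "f m = (\<Sum>\<beta>\<in>partitions n. f (shape_mono \<beta>) * sf_m \<beta> m)"
proof (cases "fin_mono m \<and> mdeg m = n")
  case True
  hence "mono_shape m \<in> partitions n" using mono_shape_partition by auto
  have "(\<Sum>\<beta>\<in>partitions n. f (shape_mono \<beta>) * sf_m \<beta> m) =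
        (\<Sum>\<beta>\<in>partitions n. if \<beta> = mono_shape m then f (shape_mono \<beta>) else 0)"
    using True by (intro sum.cong) (auto simp: sf_m_def)
  also have "\<dots> = f (shape_mono (mono_shape m))"
    using \<open>mono_shape m \<in> partitions n\<close> finite_partitions by simp
  finally show ?thesis using Lambda_eq_at_shape_mono[OF f] True by simp
next
  case False
  hence "f m = 0" using Lambda_support[OF f] by blast
  moreover have "sf_m \<beta> m = 0" if "\<beta> \<in> partitions n" for \<beta>
    using False that sum_mset_mono_shape by (auto simp: sf_m_def partitions_def)
  ultimately show ?thesis by simp
qed

lemma is_basis_Lambda_sf_m: "is_basis_Lambda n sf_m"
  unfolding is_basis_Lambda_iff
proof (intro conjI)
  show "\<forall>\<alpha>\<in>partitions n. sf_m \<alpha> \<in> Lambda n"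
    using sf_m_Lambda by blast
  show "lin_indep (partitions n) sf_m"
    unfolding lin_indep_def
  proof (intro allI impI ballI)
    fix c \<alpha> assume zero: "\<forall>m. (\<Sum>\<beta>\<in>partitions n. c \<beta> * sf_m \<beta> m) = 0" and \<alpha>: "\<alpha> \<in> partitions n"
    have "c \<alpha> = (\<Sum>\<beta>\<in>partitions n. c \<beta> * sf_m \<beta> (shape_mono \<alpha>))"
      using \<alpha> finite_partitions by (simp add: sf_m_shape_mono)
    thus "c \<alpha> = 0" using zero by simp
  qed
  show "Lambda n \<subseteq> lin_span (partitions n) sf_m"
  proof
    fix f assume "f \<in> Lambda n"
    thus "f \<in> lin_span (partitions n) sf_m"
      unfolding lin_span_def using Lambda_expand_sf_m
      by (intro CollectI exI[of _ "\<lambda>\<beta>. f (shape_mono \<beta>)"]) blast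
  qed
qed

section \<open>Power sums\<close>

lemma Lambda_sf_mult:
  assumes f: "f \<in> Lambda a" and g: "g \<in> Lambda b"
  shows "sf_mult f g \<in> Lambda (a + b)"
  unfolding Lambda_def mem_Collect_eq
proof (rule conjI; intro allI impI)
  fix m assume nz: "sf_mult f g m \<noteq> 0"
  hence fin: "fin_mono m" using sf_mult_not_fin_mono by blast
  obtain x where x: "x \<in> {..m}" "f x * g (m - x) \<noteq> 0"
    using nz unfolding sf_mult_eq by (rule sum.not_neutral_contains_not_neutral)
  have "mdeg x = a" "mdeg (m - x) = b"
    using x(2) Lambda_support[OF f, of x] Lambda_support[OF g, of "m - x"] by auto
  thus "fin_mono m \<and> mdeg m = a + b" using mdeg_diff[OF fin] x(1) fin by simp
next
  fix \<sigma> :: "nat \<Rightarrow> nat" and m assume "bij \<sigma>"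
  thus "sf_mult f g (m \<circ> \<sigma>) = sf_mult f g m"
    using Lambda_symmetric[OF f] Lambda_symmetric[OF g] by (intro sf_mult_comp_bij)
qed

lemma sf_one_Lambda: "sf_one \<in> Lambda 0"
  unfolding Lambda_def mem_Collect_eq
proof (rule conjI; intro allI impI)
  fix m assume "sf_one m \<noteq> 0"
  thus "fin_mono m \<and> mdeg m = 0" by (simp add: sf_one_def fin_mono_def mdeg_def split: if_splits)
next
  fix \<sigma> :: "nat \<Rightarrow> nat" and m :: mono assume "bij \<sigma>"
  hence "(\<forall>i. m (\<sigma> i) = 0) \<longleftrightarrow> (\<forall>i. m i = 0)" by (metis bij_pointE)
  thus "sf_one (m \<circ> \<sigma>) = sf_one m" by (simp add: sf_one_def)
qed

lemma comp_bij_eq_mono_single_iff: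
  assumes "bij \<sigma>"
  shows "(\<exists>j. m \<circ> \<sigma> = mono_single j k) \<longleftrightarrow> (\<exists>j. m = mono_single j k)"
proof -
  have inv1: "\<sigma> (inv \<sigma> l) = l" and inv2: "inv \<sigma> (\<sigma> l) = l" for l
    using assms by (simp_all add: bij_is_surj surj_f_inv_f bij_is_inj inv_f_f)
  have "m \<circ> \<sigma> = mono_single j k \<longleftrightarrow> m = mono_single (\<sigma> j) k" for j
    unfolding mono_single_def fun_eq_iff comp_def by (metis inv1 inv2)
  thus ?thesis by (metis inv1)
qed

lemma sf_p_Lambda:
  assumes "0 < k"
  shows "sf_p k \<in> Lambda k"
  unfolding Lambda_def mem_Collect_eq
proof (rule conjI; intro allI impI)
  fix m assume "sf_p k m \<noteq> 0"
  then obtain j where "m = mono_single j k" by (auto simp: sf_p_eq split: if_splits)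
  moreover have "{i. mono_single j k i \<noteq> 0} = {j}" using assms by (auto simp: mono_single_def)
  ultimately show "fin_mono m \<and> mdeg m = k" by (simp add: fin_mono_def mdeg_mono_single)
next
  fix \<sigma> :: "nat \<Rightarrow> nat" and m assume "bij \<sigma>"
  thus "sf_p k (m \<circ> \<sigma>) = sf_p k m" by (simp add: sf_p_eq comp_bij_eq_mono_single_iff)
qed

lemma sf_ppart_empty: "sf_ppart {#} = sf_one"
  by (simp flip: coeffs_ser_ppart add: ser_ppart_def coeffs_ring_simps)

lemma sf_ppart_add_mset: "sf_ppart (add_mset x \<alpha>) = sf_mult (sf_p x) (sf_ppart \<alpha>)"
  by (simp flip: coeffs_ser_ppart add: ser_ppart_def coeffs_ring_simps ser_p.rep_eq)

lemma sf_ppart_Lambda: "(\<forall>x\<in>#\<alpha>. 0 < x) \<Longrightarrow> sf_ppart \<alpha> \<in> Lambda (sum_mset \<alpha>)"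
  by (induction \<alpha>) (auto simp: sf_ppart_empty sf_one_Lambda sf_ppart_add_mset
      intro: Lambda_sf_mult sf_p_Lambda)

lemma sf_ppart_nonneg: "0 \<le> sf_ppart \<alpha> m"
  by (induction \<alpha> arbitrary: m)
     (simp_all add: sf_ppart_empty sf_ppart_add_mset sf_one_def sf_p_def sf_mult_nonneg)

lemma sf_ppart_add_mset_eq:
  assumes "fin_mono m" "0 < x"
  shows "sf_ppart (add_mset x \<alpha>) m = (\<Sum>j | x \<le> m j. sf_ppart \<alpha> (m(j := m j - x)))"
  by (simp add: sf_ppart_add_mset sf_mult_sf_p assms diff_mono_single)

lemma sf_ppart_nonzero_shape:
  assumes "\<forall>x\<in>#\<alpha>. 0 < x" "sf_ppart \<alpha> m \<noteq> 0"
  shows "fin_mono m \<and> size (mono_shape m) \<le> size \<alpha> \<and>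
         (size (mono_shape m) = size \<alpha> \<longrightarrow> mono_shape m = \<alpha>)"
  using assms
proof (induction \<alpha> arbitrary: m)
  case empty
  hence "\<forall>i. m i = 0" by (simp add: sf_ppart_empty sf_one_def split: if_splits)
  thus ?case by (simp add: fin_mono_def mono_shape_def)
next
  case (add x \<alpha>)
  have x: "0 < x" using add.prems by simp
  have fin: "fin_mono m"
    using add.prems sf_mult_not_fin_mono by (auto simp: sf_ppart_add_mset)
  obtain j where j: "x \<le> m j" "sf_ppart \<alpha> (m(j := m j - x)) \<noteq> 0"
    using add.prems(2) unfolding sf_ppart_add_mset_eq[OF fin x]
    by (auto elim: sum.not_neutral_contains_not_neutral)
  let ?m' = "m(j := m j - x)"
  have "fin_mono ?m' \<and> size (mono_shape ?m') \<le> size \<alpha> \<and>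
        (size (mono_shape ?m') = size \<alpha> \<longrightarrow> mono_shape ?m' = \<alpha>)"
    by (rule add.IH[OF _ j(2)]) (use add.prems(1) in simp)
  hence IH: "size (mono_shape ?m') \<le> size \<alpha>" "size (mono_shape ?m') = size \<alpha> \<Longrightarrow> mono_shape ?m' = \<alpha>"
    by blast+
  have shape: "mono_shape m = {#m j#} + mono_shape (m(j := 0))"
    using mono_shape_fun_upd_0[OF fin, of j] j(1) x by simp
  have shape': "mono_shape ?m' = (if m j = x then {#} else {#m j - x#}) + mono_shape (m(j := 0))"
    using mono_shape_fun_upd_0[OF fin_mono_fun_upd[OF fin, of j "m j - x"], of j] j(1) by simp
  show ?case
  proof (cases "m j = x")
    case True
    hence "mono_shape m = add_mset x (mono_shape ?m')" using shape shape' by simp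
    thus ?thesis using IH fin by auto
  next
    case False
    hence "size (mono_shape m) = size (mono_shape ?m')" using shape shape' j(1) by simp
    thus ?thesis using IH fin by simp
  qed
qed

lemma sf_ppart_at_shape_pos:
  assumes "\<forall>x\<in>#\<alpha>. 0 < x" "fin_mono m" "mono_shape m = \<alpha>"
  shows "0 < sf_ppart \<alpha> m"
  using assms
proof (induction \<alpha> arbitrary: m)
  case empty
  hence "{i. m i \<noteq> 0} = {}" by (simp add: mono_shape_def fin_mono_def mset_set_empty_iff)
  thus ?case by (auto simp: sf_ppart_empty sf_one_def)
next
  case (add x \<alpha>)
  have x: "0 < x" using add.prems by simp
  have "x \<in># mono_shape m" using add.prems(3) by simp
  then obtain j where j: "m j = x" by (auto simp: mono_shape_def)
  let ?m' = "m(j := m j - x)"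
  have "mono_shape ?m' = \<alpha>"
    using mono_shape_fun_upd_0[OF add.prems(2), of j] add.prems(3) j x by simp
  hence "0 < sf_ppart \<alpha> ?m'"
    using add.IH add.prems fin_mono_fun_upd by simp
  also have "sf_ppart \<alpha> ?m' \<le> (\<Sum>j | x \<le> m j. sf_ppart \<alpha> (m(j := m j - x)))"
    using j finite_exponents_ge[OF add.prems(2) x]
    by (intro member_le_sum) (auto simp: sf_ppart_nonneg)
  also have "\<dots> = sf_ppart (add_mset x \<alpha>) m"
    by (simp add: sf_ppart_add_mset_eq[OF add.prems(2) x])
  finally show ?case .
qed

lemma is_basis_Lambda_sf_ppart: "is_basis_Lambda n sf_ppart"
proof (rule is_basis_Lambda_triangular[OF is_basis_Lambda_sf_m,
      where T = "\<lambda>\<alpha> \<beta>. sf_ppart \<alpha> (shape_mono \<beta>)" and r = size])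
  fix \<alpha> m assume \<alpha>: "\<alpha> \<in> partitions n"
  show "sf_ppart \<alpha> m = (\<Sum>\<beta>\<in>partitions n. sf_ppart \<alpha> (shape_mono \<beta>) * sf_m \<beta> m)"
    using sf_ppart_Lambda[of \<alpha>] \<alpha> partitions_sum_mset[OF \<alpha>]
    by (intro Lambda_expand_sf_m) (auto simp: partitions_def)
next
  fix \<alpha> assume \<alpha>: "\<alpha> \<in> partitions n"
  show "sf_ppart \<alpha> (shape_mono \<alpha>) \<noteq> 0"
    using sf_ppart_at_shape_pos[of \<alpha>] shape_mono_has_shape[of \<alpha>] partitions_pos[OF \<alpha>] by fastforce
next
  fix \<alpha> \<beta> assume "\<alpha> \<in> partitions n" "\<beta> \<in> partitions n" "sf_ppart \<alpha> (shape_mono \<beta>) \<noteq> 0"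
  thus "\<beta> = \<alpha> \<or> size \<beta> < size \<alpha>"
    using sf_ppart_nonzero_shape[of \<alpha> "shape_mono \<beta>"] shape_mono_has_shape[of \<beta>] partitions_pos
    by fastforce
qed

lemma is_basis_Lambda_p_triangular:
  assumes "\<And>\<alpha>. \<alpha> \<in> partitions n \<Longrightarrow> p_triangular n \<alpha> (x \<alpha>)"
  shows "is_basis_Lambda n (\<lambda>\<alpha>. coeffs (x \<alpha>))"
proof -
  have "\<forall>\<alpha>\<in>partitions n. \<exists>c. p_expansion n (x \<alpha>) c \<and> 0 < c \<alpha> \<and>
          (\<forall>\<nu>\<in>partitions n. c \<nu> \<noteq> 0 \<longrightarrow> \<nu> = \<alpha> \<or> size \<alpha> < size \<nu>)"
    using assms unfolding p_triangular_def by blast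
  then obtain c where c: "\<And>\<alpha>. \<alpha> \<in> partitions n \<Longrightarrow> p_expansion n (x \<alpha>) (c \<alpha>) \<and> 0 < c \<alpha> \<alpha> \<and>
          (\<forall>\<nu>\<in>partitions n. c \<alpha> \<nu> \<noteq> 0 \<longrightarrow> \<nu> = \<alpha> \<or> size \<alpha> < size \<nu>)"
    by metis
  show ?thesis
  proof (rule is_basis_Lambda_triangular[OF is_basis_Lambda_sf_ppart,
        where T = c and r = "\<lambda>\<nu>. n - size \<nu>"])
    fix \<alpha> m assume "\<alpha> \<in> partitions n"
    thus "coeffs (x \<alpha>) m = (\<Sum>\<nu>\<in>partitions n. c \<alpha> \<nu> * sf_ppart \<nu> m)"
      using c coeffs_p_expansion by blast
  next
    fix \<alpha> assume "\<alpha> \<in> partitions n"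
    thus "c \<alpha> \<alpha> \<noteq> 0" using c by fastforce
  next
    fix \<alpha> \<beta> assume \<alpha>: "\<alpha> \<in> partitions n" and \<beta>: "\<beta> \<in> partitions n" and "c \<alpha> \<beta> \<noteq> 0"
    hence "\<beta> = \<alpha> \<or> size \<alpha> < size \<beta>" using c by blast
    moreover have "size \<beta> \<le> n"
      using size_le_sum_mset[of \<beta>] partitions_pos[OF \<beta>] partitions_sum_mset[OF \<beta>] by simp
    ultimately show "\<beta> = \<alpha> \<or> n - size \<beta> < n - size \<alpha>" by auto
  qed
qed

theorem mainTheorem6:
  fixes n :: nat
  shows "is_basis_Lambda n sf_hpart \<and> is_basis_Lambda n sf_C \<and> is_basis_Lambda n sf_K"
proof (intro conjI)
  show "is_basis_Lambda n sf_hpart"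
    using is_basis_Lambda_p_triangular[OF p_triangular_ser_hpart]
    by (simp add: coeffs_ser_hpart[abs_def])
  show "is_basis_Lambda n sf_C"
    using is_basis_Lambda_p_triangular[OF p_triangular_ser_C]
    by (simp add: coeffs_ser_C[abs_def])
  show "is_basis_Lambda n sf_K"
    using is_basis_Lambda_p_triangular[OF p_triangular_ser_K]
    by (simp add: coeffs_ser_K[abs_def])
qed

end
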